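(* Let $\pi=\langle t,a,b\mid t^{-1}at=a^2,\ t^{-1}b^2t=b\rangle$ and let $\phi\colon\pi\to\mathbb{Z}$ be the epimorphism with $\phi(t)=1$ and $\phi(a)=\phi(b)=0$ (a generator of $H^1(\pi;\mathbb{Z})\cong\mathbb{Z}$). Then $\operatorname{rg}(\pi,\phi)=0$, but $\pi$ cannot be written as an ascending or descending HNN extension of a finitely generated group compatible with $\phi$ (i.e. as $\langle B,t'\mid t'^{-1}A_+t'=A_-\rangle$ with $B$ finitely generated, $A_+=B$ or $A_-=B$, $\phi(t')=1$ and $\phi(B)=0$).
   Context: For a group $H$, $\operatorname{rk}(H)$ is the minimal number of generators. For finitely generated $G$ and a surjective homomorphism $\phi\colon G\to\mathbb{Z}$, with $G_i=\operatorname{Ker}(G\xrightarrow{\phi}\mathbb{Z}\to\mathbb{Z}/i)$, the rank gradient is $\operatorname{rg}(G,\phi)=\liminf_{i\to\infty}\frac{\operatorname{rk}(G_i)}{[G:G_i]}$. An HNN extension $\langle B,t\mid t^{-1}A_+t=A_-\rangle$ with $A_\pm\leq B$ is ascending if $A_+=B$ and descending if $A_-=B$. *)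

theory Defs
  imports "HOL-Algebra.Algebra" "HOL-Library.Extended_Real" "HOL-Library.Liminf_Limsup"
begin

text \<open>Words over a generating type: (x, True) stands for x, (x, False) for x^-1.
  Two words are equivalent iff they are equal in the group with generators 'g and
  relators R, i.e. modulo the congruence generated by free cancellation and the relators
  (the normal closure of R in the free group).\<close>

type_synonym 'g word = "('g \<times> bool) list"

inductive pres_rel :: "'g word set \<Rightarrow> 'g word \<Rightarrow> 'g word \<Rightarrow> bool" for R where
  refl: "pres_rel R w w"
| sym: "pres_rel R v w \<Longrightarrow> pres_rel R w v"
| trans: "pres_rel R u v \<Longrightarrow> pres_rel R v w \<Longrightarrow> pres_rel R u w"
| cancel: "pres_rel R (xs @ [(x, s), (x, \<not> s)] @ ys) (xs @ ys)"
| relator: "r \<in> R \<Longrightarrow> pres_rel R (xs @ r @ ys) (xs @ ys)"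

definition pres_class :: "'g word set \<Rightarrow> 'g word \<Rightarrow> 'g word set" where
  "pres_class R w = {v. pres_rel R w v}"

definition pres_mult :: "'g word set \<Rightarrow> 'g word set \<Rightarrow> 'g word set \<Rightarrow> 'g word set" where
  "pres_mult R U V = pres_class R ((SOME u. u \<in> U) @ (SOME v. v \<in> V))"

definition presented_group :: "'g word set \<Rightarrow> 'g word set monoid" where
  "presented_group R =
     \<lparr>carrier = range (pres_class R),
      monoid.mult = pres_mult R,
      one = pres_class R []\<rparr>"

definition pres_gen :: "'g word set \<Rightarrow> 'g \<Rightarrow> 'g word set" where
  "pres_gen R x = pres_class R [(x, True)]"

datatype pi_gen = T | A | B

definition pi_rels :: "pi_gen word set" where
  "pi_rels = { [(T, False), (A, True), (T, True), (A, False), (A, False)],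
               [(T, False), (B, True), (B, True), (T, True), (B, False)] }"

definition pi_group :: "pi_gen word set monoid" where
  "pi_group = presented_group pi_rels"

text \<open>The HNN extension \<open>\<langle>B, t | t^-1 a t = \<theta>(a), a \<in> A+\<rangle>\<close> of a group B with
  \<open>\<theta> : A+ \<rightarrow> A-\<close>. Generators: Some b for elements of B, None for the stable letter t.
  Relators: the multiplication table of B, the killing of symbols outside carrier B,
  and t^-1 a t \<theta>(a)^-1 for a in A+.\<close>
definition HNN_rels :: "('b, 'm) monoid_scheme \<Rightarrow> 'b set \<Rightarrow> ('b \<Rightarrow> 'b) \<Rightarrow> 'b option word set" where
  "HNN_rels Bg Ap \<theta> =
     {[(Some x, True), (Some y, True), (Some (x \<otimes>\<^bsub>Bg\<^esub> y), False)] | x y.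
        x \<in> carrier Bg \<and> y \<in> carrier Bg}
   \<union> {[(Some x, True)] | x. x \<notin> carrier Bg}
   \<union> {[(None, False), (Some a, True), (None, True), (Some (\<theta> a), False)] | a. a \<in> Ap}"

definition HNN :: "('b, 'm) monoid_scheme \<Rightarrow> 'b set \<Rightarrow> ('b \<Rightarrow> 'b) \<Rightarrow> 'b option word set monoid" where
  "HNN Bg Ap \<theta> = presented_group (HNN_rels Bg Ap \<theta>)"

definition HNN_base :: "('b, 'm) monoid_scheme \<Rightarrow> 'b set \<Rightarrow> ('b \<Rightarrow> 'b) \<Rightarrow> 'b \<Rightarrow> 'b option word set" where
  "HNN_base Bg Ap \<theta> x = pres_gen (HNN_rels Bg Ap \<theta>) (Some x)"

definition HNN_stable :: "('b, 'm) monoid_scheme \<Rightarrow> 'b set \<Rightarrow> ('b \<Rightarrow> 'b) \<Rightarrow> 'b option word set" where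
  "HNN_stable Bg Ap \<theta> = pres_gen (HNN_rels Bg Ap \<theta>) None"

definition fin_gen :: "('a, 'm) monoid_scheme \<Rightarrow> bool" where
  "fin_gen G \<longleftrightarrow> (\<exists>S. finite S \<and> S \<subseteq> carrier G \<and> generate G S = carrier G)"

text \<open>Minimal number of generators (meaningful for finitely generated groups).\<close>
definition rk :: "('a, 'm) monoid_scheme \<Rightarrow> nat" where
  "rk G = (LEAST n. \<exists>S. finite S \<and> card S = n \<and> S \<subseteq> carrier G \<and> generate G S = carrier G)"

definition phi_kernel :: "('a, 'm) monoid_scheme \<Rightarrow> ('a \<Rightarrow> int) \<Rightarrow> nat \<Rightarrow> 'a set" where
  "phi_kernel G \<phi> i = {g \<in> carrier G. \<phi> g mod int i = 0}"

definition rank_gradient :: "('a, 'm) monoid_scheme \<Rightarrow> ('a \<Rightarrow> int) \<Rightarrow> ereal" where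
  "rank_gradient G \<phi> =
     liminf (\<lambda>i. ereal (real (rk (G\<lparr>carrier := phi_kernel G \<phi> i\<rparr>))
                     / real (card (rcosets\<^bsub>G\<^esub> (phi_kernel G \<phi> i)))))"

end

theory Submission
  imports Defs
begin

text \<open>
  The kernel of \<open>\<pi> \<rightarrow> \<int> \<rightarrow> \<int>/i\<close> is generated by \<open>t\<^sup>i\<close>, \<open>a\<close> and \<open>t\<^sup>-\<^sup>(\<^sup>i\<^sup>-\<^sup>1\<^sup>) b t\<^sup>i\<^sup>-\<^sup>1\<close>
  (conjugating by \<open>t\<close> doubles \<open>a\<close> and halves \<open>b\<close>), so its rank stays at most 3 while its
  index is \<open>i\<close>; hence the rank gradient vanishes.

  Suppose now that \<open>\<pi>\<close> is generated by a finitely generated \<open>K \<subseteq> ker \<phi>\<close> and an element \<open>u\<close>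
  with \<open>\<phi>(u) = \<plusminus>1\<close> and \<open>u\<inverse> K u \<subseteq> K\<close> (an ascending extension with stable letter \<open>s\<close>, or a
  descending one with \<open>u = s\<inverse>\<close>). Then every element of \<open>\<pi>\<close> is of the form \<open>u\<^sup>k b u\<^sup>-\<^sup>m\<close> with
  \<open>b \<in> K\<close>. Let \<open>\<pi>\<close> act on \<open>\<real>\<close> by dyadic affine maps such that \<open>u\<close> has slope 2: kill \<open>a\<close> and
  let \<open>t, b\<close> act by \<open>x \<mapsto> 2x, x \<mapsto> x + 1\<close>, or kill \<open>b\<close> and let \<open>t, a\<close> act by
  \<open>x \<mapsto> x/2, x \<mapsto> x + 1\<close>. The translations in the image of \<open>K\<close> lie in \<open>2\<^sup>-\<^sup>M\<int>\<close> for some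
  \<open>M\<close>, as \<open>K\<close> is finitely generated, and a translation \<open>u\<^sup>k b u\<^sup>-\<^sup>k\<close> is \<open>2\<^sup>k\<close> times that of \<open>b\<close>;
  yet conjugating \<open>b\<close> (resp. \<open>a\<close>) by powers of \<open>t\<close> produces the translation by \<open>2\<^sup>-\<^sup>M\<^sup>-\<^sup>1\<close>.
\<close>

section \<open>Presented groups\<close>

lemma pres_rel_append_cong:
  "pres_rel R u v \<Longrightarrow> pres_rel R (xs @ u @ ys) (xs @ v @ ys)"
proof (induction rule: pres_rel.induct)
  case (cancel xs' x s ys')
  show ?case using pres_rel.cancel[of R "xs @ xs'" x s "ys' @ ys"] by simp
next
  case (relator r xs' ys')
  show ?case using pres_rel.relator[OF relator, of "xs @ xs'" "ys' @ ys"] by simp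
next
  case (sym v w)
  from sym.IH show ?case by (rule pres_rel.sym)
next
  case (trans u v w)
  from trans.IH show ?case by (rule pres_rel.trans)
qed (rule pres_rel.refl)

lemma pres_rel_append:
  assumes "pres_rel R u u'" and "pres_rel R v v'"
  shows "pres_rel R (u @ v) (u' @ v')"
  using pres_rel_append_cong[OF assms(1), of "[]" v] pres_rel_append_cong[OF assms(2), of u' "[]"]
  by (auto intro: pres_rel.trans)

lemma pres_class_eq_iff: "pres_class R u = pres_class R v \<longleftrightarrow> pres_rel R u v"
proof
  assume "pres_class R u = pres_class R v"
  moreover have "v \<in> pres_class R v" by (simp add: pres_class_def pres_rel.refl)
  ultimately show "pres_rel R u v" by (metis mem_Collect_eq pres_class_def)
next
  assume "pres_rel R u v"
  then show "pres_class R u = pres_class R v"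
    unfolding pres_class_def by (auto intro: pres_rel.trans pres_rel.sym)
qed

lemma pres_rel_some_pres_class: "pres_rel R u (SOME v. v \<in> pres_class R u)"
proof -
  have "u \<in> pres_class R u" by (simp add: pres_class_def pres_rel.refl)
  then have "(SOME v. v \<in> pres_class R u) \<in> pres_class R u" by (rule someI)
  then show ?thesis by (simp add: pres_class_def)
qed

lemma carrier_presented_group: "carrier (presented_group R) = range (pres_class R)"
  by (simp add: presented_group_def)

lemma mult_presented_group [simp]:
  "pres_class R u \<otimes>\<^bsub>presented_group R\<^esub> pres_class R v = pres_class R (u @ v)"
  unfolding presented_group_def pres_mult_def
  by (simp add: pres_class_eq_iff pres_rel.sym pres_rel_append pres_rel_some_pres_class)

lemma one_presented_group [simp]: "\<one>\<^bsub>presented_group R\<^esub> = pres_class R []"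
  by (simp add: presented_group_def)

lemma pres_class_in_carrier [simp]: "pres_class R w \<in> carrier (presented_group R)"
  by (simp add: carrier_presented_group)

lemma pres_gen_in_carrier [simp]: "pres_gen R x \<in> carrier (presented_group R)"
  by (simp add: pres_gen_def)

definition word_inv :: "'g word \<Rightarrow> 'g word" where
  "word_inv w = rev (map (\<lambda>(x, s). (x, \<not> s)) w)"

lemma pres_rel_word_inv_append: "pres_rel R (word_inv w @ w) []"
proof (induction w)
  case (Cons a w)
  obtain x s where a: "a = (x, s)" by fastforce
  have "word_inv (a # w) @ a # w = word_inv w @ [(x, \<not> s), (x, \<not> \<not> s)] @ w"
    by (simp add: word_inv_def a)
  moreover have "pres_rel R (word_inv w @ [(x, \<not> s), (x, \<not> \<not> s)] @ w) (word_inv w @ w)"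
    by (rule pres_rel.cancel)
  ultimately show ?case using Cons.IH by (metis pres_rel.trans)
qed (simp add: word_inv_def pres_rel.refl)

lemma presented_group_carrierE:
  assumes "x \<in> carrier (presented_group R)"
  obtains u where "x = pres_class R u"
  using assms by (auto simp: carrier_presented_group)

lemma group_presented_group: "group (presented_group R)"
proof (rule groupI)
  fix x
  assume "x \<in> carrier (presented_group R)"
  then obtain u where x: "x = pres_class R u"
    by (rule presented_group_carrierE)
  have "pres_class R (word_inv u) \<otimes>\<^bsub>presented_group R\<^esub> x = \<one>\<^bsub>presented_group R\<^esub>"
    by (simp add: x pres_class_eq_iff pres_rel_word_inv_append)
  then show "\<exists>x'\<in>carrier (presented_group R). x' \<otimes>\<^bsub>presented_group R\<^esub> x = \<one>\<^bsub>presented_group R\<^esub>"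
    by (rule bexI[OF _ pres_class_in_carrier])
qed (auto elim!: presented_group_carrierE)

definition word_eval :: "('b, 'm) monoid_scheme \<Rightarrow> ('g \<Rightarrow> 'b) \<Rightarrow> 'g word \<Rightarrow> 'b" where
  "word_eval H f w = foldr (\<lambda>(x, s) y. (if s then f x else inv\<^bsub>H\<^esub> (f x)) \<otimes>\<^bsub>H\<^esub> y) w \<one>\<^bsub>H\<^esub>"

lemma word_eval_Nil [simp]: "word_eval H f [] = \<one>\<^bsub>H\<^esub>"
  by (simp add: word_eval_def)

lemma word_eval_Cons [simp]:
  "word_eval H f ((x, s) # w) = (if s then f x else inv\<^bsub>H\<^esub> (f x)) \<otimes>\<^bsub>H\<^esub> word_eval H f w"
  by (simp add: word_eval_def)

context group
begin

lemma word_eval_in_generate: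
  assumes "range f \<subseteq> carrier G"
  shows "word_eval G f w \<in> generate G (range f)"
proof (induction w)
  case (Cons a w)
  obtain x s where "a = (x, s)" by fastforce
  with Cons show ?case
    by (auto intro: generate.eng generate.incl generate.inv)
qed (simp add: generate.one)

lemma word_eval_closed:
  "range f \<subseteq> carrier G \<Longrightarrow> word_eval G f w \<in> carrier G"
  using word_eval_in_generate generate_incl by blast

lemma word_eval_append:
  assumes "range f \<subseteq> carrier G"
  shows "word_eval G f (u @ v) = word_eval G f u \<otimes> word_eval G f v"
proof (induction u)
  case (Cons a u)
  obtain x s where "a = (x, s)" by fastforce
  moreover have "f x \<in> carrier G" using assms by auto
  ultimately show ?case using Cons assms by (simp add: m_assoc word_eval_closed)
qed (simp add: assms word_eval_closed)

lemma word_eval_pres_rel: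
  assumes f: "range f \<subseteq> carrier G" and R: "\<And>r. r \<in> R \<Longrightarrow> word_eval G f r = \<one>"
  shows "pres_rel R u v \<Longrightarrow> word_eval G f u = word_eval G f v"
proof (induction rule: pres_rel.induct)
  case (cancel xs x s ys)
  have "f x \<in> carrier G" using f by auto
  then have "word_eval G f [(x, s), (x, \<not> s)] = \<one>"
    by (cases s) auto
  with f show ?case by (simp only: word_eval_append) (simp add: word_eval_closed)
next
  case (relator r xs ys)
  with f R show ?case by (simp add: word_eval_append word_eval_closed)
qed auto

end

lemma pres_class_eq_word_eval:
  "pres_class R w = word_eval (presented_group R) (pres_gen R) w"
proof (induction w)
  case (Cons a w)
  interpret group "presented_group R" by (rule group_presented_group)
  obtain x s where a: "a = (x, s)" by fastforce
  have "inv\<^bsub>presented_group R\<^esub> pres_gen R x = pres_class R [(x, False)]"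
    using pres_rel.cancel[of R "[]" x False "[]"]
    by (intro inv_equality) (simp_all add: pres_gen_def pres_class_eq_iff)
  then have "pres_class R [(x, s)] = (if s then pres_gen R x else inv\<^bsub>presented_group R\<^esub> pres_gen R x)"
    by (simp add: pres_gen_def)
  moreover have "pres_class R (a # w) = pres_class R [(x, s)] \<otimes>\<^bsub>presented_group R\<^esub> pres_class R w"
    by (simp add: a)
  ultimately show ?case
    by (simp only: Cons.IH a word_eval_Cons)
qed simp

lemma word_eval_relator:
  "r \<in> R \<Longrightarrow> word_eval (presented_group R) (pres_gen R) r = \<one>\<^bsub>presented_group R\<^esub>"
  using pres_rel.relator[of r R "[]" "[]"] by (simp flip: pres_class_eq_word_eval add: pres_class_eq_iff)

lemma generate_pres_gen:
  "generate (presented_group R) (range (pres_gen R)) = carrier (presented_group R)"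
proof -
  interpret group "presented_group R" by (rule group_presented_group)
  have "range (pres_gen R) \<subseteq> carrier (presented_group R)" by auto
  then have "pres_class R w \<in> generate (presented_group R) (range (pres_gen R))" for w
    unfolding pres_class_eq_word_eval by (rule word_eval_in_generate)
  then show ?thesis
    using generate_incl[OF \<open>range (pres_gen R) \<subseteq> carrier (presented_group R)\<close>]
    unfolding carrier_presented_group by blast
qed

definition pres_lift :: "'g word set \<Rightarrow> ('b, 'm) monoid_scheme \<Rightarrow> ('g \<Rightarrow> 'b) \<Rightarrow> 'g word set \<Rightarrow> 'b" where
  "pres_lift R H f U = word_eval H f (SOME u. u \<in> U)"

context
  fixes R :: "'g word set" and H :: "('b, 'm) monoid_scheme" and f :: "'g \<Rightarrow> 'b"
  assumes H: "group H" and f: "range f \<subseteq> carrier H"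
    and relators: "\<And>r. r \<in> R \<Longrightarrow> word_eval H f r = \<one>\<^bsub>H\<^esub>"
begin

lemma pres_lift_pres_class: "pres_lift R H f (pres_class R u) = word_eval H f u"
  unfolding pres_lift_def
  using group.word_eval_pres_rel[OF H f relators pres_rel_some_pres_class[of R u]] by simp

lemma pres_lift_hom: "pres_lift R H f \<in> hom (presented_group R) H"
  by (rule homI)
     (auto simp: carrier_presented_group pres_lift_pres_class group.word_eval_closed[OF H f]
        group.word_eval_append[OF H f])

lemma pres_lift_pres_gen: "pres_lift R H f (pres_gen R x) = f x"
proof -
  interpret group H by (rule H)
  have "f x \<in> carrier H" using f by auto
  then show ?thesis by (simp add: pres_gen_def pres_lift_pres_class)
qed

end

lemma hom_eq_on_generate:
  assumes "group G" "group H" "h \<in> hom G H" "h' \<in> hom G H" "S \<subseteq> carrier G"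
    and "\<And>x. x \<in> S \<Longrightarrow> h x = h' x" and "g \<in> generate G S"
  shows "h g = h' g"
  using assms(7)
proof induction
  case one
  then show ?case using assms by (metis group_hom.hom_one group_hom_axioms.intro group_hom.intro)
next
  case (incl x)
  then show ?case by (rule assms(6))
next
  case (inv x)
  then show ?case using assms
    by (metis group_hom.hom_inv group_hom_axioms.intro group_hom.intro subsetD)
next
  case (eng g1 g2)
  then have "g1 \<in> carrier G" "g2 \<in> carrier G"
    using group.generate_in_carrier[OF assms(1,5)] by auto
  with eng.IH show ?case using assms(3,4) by (simp add: hom_mult)
qed

section \<open>Conjugation and normal forms in groups\<close>

context group
begin

lemma mult_inv_cancel_left [simp]: "x \<in> carrier G \<Longrightarrow> y \<in> carrier G \<Longrightarrow> x \<otimes> (inv x \<otimes> y) = y"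
  by (simp add: m_assoc[symmetric])

lemma inv_nat_pow_Suc: "x \<in> carrier G \<Longrightarrow> inv (x [^] (n::nat) \<otimes> x) = inv (x [^] n) \<otimes> inv x"
  by (simp only: nat_pow_Suc[symmetric] nat_pow_Suc2 inv_mult_group nat_pow_closed)

lemma subgroup_nat_pow_closed:
  assumes "subgroup H G" "h \<in> H" shows "h [^] (n :: nat) \<in> H"
  using subgroup_int_pow_closed[OF assms, of "int n"] subgroup.mem_carrier[OF assms]
  by (simp add: int_pow_int)

lemma generate_insert_inv:
  assumes "x \<in> carrier G" "H \<subseteq> carrier G"
  shows "generate G (insert (inv x) H) = generate G (insert x H)"
proof -
  have *: "generate G (insert (inv y) H) \<subseteq> generate G (insert y H)" if "y \<in> carrier G" for y
  proof (rule generate_subgroup_incl)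
    show "insert (inv y) H \<subseteq> generate G (insert y H)"
      using generate.inv[of y "insert y H" G] generate.incl[of _ "insert y H" G] by auto
    show "subgroup (generate G (insert y H)) G"
      using that assms(2) by (intro generate_is_subgroup) auto
  qed
  show ?thesis
    using *[OF assms(1)] *[OF inv_closed[OF assms(1)]] assms(1) by auto
qed

lemma carrier_subset_if_right_mult_closed:
  assumes "generate G S = carrier G" "S \<subseteq> carrier G" "W \<subseteq> carrier G" "\<one> \<in> W"
    and "\<And>w x. w \<in> W \<Longrightarrow> x \<in> S \<Longrightarrow> w \<otimes> x \<in> W \<and> w \<otimes> inv x \<in> W"
  shows "carrier G \<subseteq> W"
proof -
  have "\<forall>w\<in>W. w \<otimes> g \<in> W" if "g \<in> generate G S" for g
    using that
  proof induction
    case one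
    then show ?case using assms(3) by auto
  next
    case (eng g1 g2)
    then have "g1 \<in> carrier G" "g2 \<in> carrier G"
      using generate_in_carrier[OF assms(2)] by auto
    with eng.IH show ?case using assms(3) by (auto simp flip: m_assoc)
  qed (use assms(5) in auto)
  then show ?thesis using assms(1,4) by fastforce
qed

lemma conj_nat_pow:
  assumes "g \<in> carrier G" "x \<in> carrier G"
  shows "inv g \<otimes> x [^] (n::nat) \<otimes> g = (inv g \<otimes> x \<otimes> g) [^] n"
proof (induction n)
  case (Suc n)
  have "inv g \<otimes> x [^] Suc n \<otimes> g = (inv g \<otimes> x [^] n \<otimes> g) \<otimes> (inv g \<otimes> x \<otimes> g)"
    using assms by (simp add: m_assoc)
  with Suc.IH show ?case by simp
qed (use assms in simp)

lemma conj_pow_iterate: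
  assumes t: "t \<in> carrier G" and x: "x \<in> carrier G" and conj: "inv t \<otimes> x \<otimes> t = x [^] (n::nat)"
  shows "inv (t [^] r) \<otimes> x \<otimes> t [^] r = x [^] (n ^ r)"
proof (induction r)
  case (Suc r)
  have "inv (t [^] Suc r) \<otimes> x \<otimes> t [^] Suc r = inv t \<otimes> (inv (t [^] r) \<otimes> x \<otimes> t [^] r) \<otimes> t"
    using t x by (simp add: inv_mult_group m_assoc)
  also have "\<dots> = (x [^] n) [^] (n ^ r)"
    using Suc.IH conj_nat_pow[OF t x] conj by simp
  finally show ?case
    using x by (simp add: nat_pow_pow mult.commute)
qed (use x in simp)

lemma conj_root_iterate:
  assumes t: "t \<in> carrier G" and y: "y \<in> carrier G"
    and conj: "inv t \<otimes> y [^] (n::nat) \<otimes> t = y" and "r \<le> j"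
  shows "inv (t [^] r) \<otimes> y \<otimes> t [^] r = (inv (t [^] j) \<otimes> y \<otimes> t [^] j) [^] (n ^ (j - r))"
proof -
  define c where "c k = inv (t [^] k) \<otimes> y \<otimes> t [^] k" for k :: nat
  have c_carrier: "c k \<in> carrier G" for k
    unfolding c_def using t y by simp
  have step: "c k = c (Suc k) [^] n" for k
  proof -
    have "c (Suc k) [^] n = inv (t [^] Suc k) \<otimes> y [^] n \<otimes> t [^] Suc k"
      unfolding c_def using t y by (simp add: conj_nat_pow)
    also have "\<dots> = inv (t [^] k) \<otimes> (inv t \<otimes> y [^] n \<otimes> t) \<otimes> t [^] k"
      using t y unfolding nat_pow_Suc2[OF t] by (simp add: inv_mult_group m_assoc)
    finally show ?thesis
      unfolding c_def using conj by simp
  qed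
  have "c (j - d) = c j [^] (n ^ d)" if "d \<le> j" for d
    using that
  proof (induction d)
    case (Suc d)
    then have "c (j - Suc d) = c (j - d) [^] n"
      using step[of "j - Suc d"] by (simp add: Suc_diff_Suc)
    with Suc show ?case
      using c_carrier by (simp add: nat_pow_pow mult.commute)
  qed (use c_carrier in simp)
  from this[of "j - r"] \<open>r \<le> j\<close> show ?thesis
    unfolding c_def by simp
qed

definition ascending_words :: "'a \<Rightarrow> 'a set \<Rightarrow> 'a set" where
  "ascending_words u K = {u [^] (k::nat) \<otimes> b \<otimes> inv (u [^] (m::nat)) | k m b. b \<in> K}"

lemma ascending_wordsI: "b \<in> K \<Longrightarrow> u [^] (k::nat) \<otimes> b \<otimes> inv (u [^] (m::nat)) \<in> ascending_words u K"
  unfolding ascending_words_def by blast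

lemma ascending_wordsE:
  assumes "w \<in> ascending_words u K"
  obtains k m b where "b \<in> K" "w = u [^] (k::nat) \<otimes> b \<otimes> inv (u [^] (m::nat))"
  using assms unfolding ascending_words_def by blast

context
  fixes u K
  assumes u: "u \<in> carrier G" and K: "subgroup K G"
    and conj: "\<And>b. b \<in> K \<Longrightarrow> inv u \<otimes> b \<otimes> u \<in> K"
begin

lemma conj_nat_pow_in_subgroup: "b \<in> K \<Longrightarrow> inv (u [^] (m::nat)) \<otimes> b \<otimes> u [^] m \<in> K"
proof (induction m)
  case (Suc m)
  with conj have "inv u \<otimes> (inv (u [^] m) \<otimes> b \<otimes> u [^] m) \<otimes> u \<in> K" by blast
  with u subgroup.mem_carrier[OF K Suc.prems] show ?case by (simp add: inv_mult_group m_assoc)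
qed (use subgroup.mem_carrier[OF K] in simp)

lemma ascending_words_mult_subgroup:
  assumes "w \<in> ascending_words u K" "b' \<in> K"
  shows "w \<otimes> b' \<in> ascending_words u K"
proof -
  obtain k m b where b: "b \<in> K" and w: "w = u [^] (k::nat) \<otimes> b \<otimes> inv (u [^] (m::nat))"
    using assms(1) by (rule ascending_wordsE)
  have "w \<otimes> b' = u [^] k \<otimes> (b \<otimes> (inv (u [^] m) \<otimes> b' \<otimes> u [^] m)) \<otimes> inv (u [^] m)"
    using u b assms(2) subgroup.mem_carrier[OF K] by (simp add: w m_assoc)
  then show ?thesis
    using ascending_wordsI[OF subgroup.m_closed[OF K b conj_nat_pow_in_subgroup[OF assms(2)]]] by simp
qed

lemma ascending_words_mult_inv:
  assumes "w \<in> ascending_words u K"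
  shows "w \<otimes> inv u \<in> ascending_words u K"
proof -
  obtain k m b where b: "b \<in> K" and w: "w = u [^] (k::nat) \<otimes> b \<otimes> inv (u [^] (m::nat))"
    using assms by (rule ascending_wordsE)
  have "w \<otimes> inv u = u [^] k \<otimes> b \<otimes> inv (u [^] Suc m)"
    using u b subgroup.mem_carrier[OF K] by (simp add: w m_assoc inv_nat_pow_Suc)
  then show ?thesis using ascending_wordsI[OF b, where k = k and m = "Suc m"] by (simp only:)
qed

lemma ascending_words_mult:
  assumes "w \<in> ascending_words u K"
  shows "w \<otimes> u \<in> ascending_words u K"
proof -
  obtain k m b where b: "b \<in> K" and w: "w = u [^] (k::nat) \<otimes> b \<otimes> inv (u [^] (m::nat))"
    using assms by (rule ascending_wordsE)
  have bG: "b \<in> carrier G" using subgroup.mem_carrier[OF K b] .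
  show ?thesis
  proof (cases m)
    case 0
    have "w \<otimes> u = u [^] Suc k \<otimes> (inv u \<otimes> b \<otimes> u) \<otimes> inv (u [^] (0::nat))"
      using u bG by (simp add: w 0 m_assoc)
    then show ?thesis using ascending_wordsI[OF conj[OF b], where k = "Suc k" and m = 0] by (simp only:)
  next
    case (Suc m')
    have "w \<otimes> u = u [^] k \<otimes> b \<otimes> inv (u [^] m')"
      using u bG by (simp add: w Suc m_assoc inv_nat_pow_Suc)
    then show ?thesis using ascending_wordsI[OF b] by simp
  qed
qed

lemma carrier_subset_ascending_words:
  assumes "generate G (insert u K) = carrier G"
  shows "carrier G \<subseteq> ascending_words u K"
proof (rule carrier_subset_if_right_mult_closed[OF assms])
  show "insert u K \<subseteq> carrier G" "ascending_words u K \<subseteq> carrier G"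
    using u subgroup.subset[OF K] by (auto simp: ascending_words_def)
  show "\<one> \<in> ascending_words u K"
    using ascending_wordsI[OF subgroup.one_closed[OF K], where k = 0 and m = 0] by simp
  fix w x assume "w \<in> ascending_words u K" "x \<in> insert u K"
  then show "w \<otimes> x \<in> ascending_words u K \<and> w \<otimes> inv x \<in> ascending_words u K"
    using ascending_words_mult ascending_words_mult_inv ascending_words_mult_subgroup
      subgroup.m_inv_closed[OF K] by auto
qed

end

definition power_translates :: "'a \<Rightarrow> nat \<Rightarrow> 'a set \<Rightarrow> 'a set" where
  "power_translates t i K = {h \<otimes> inv (t [^] (r::nat)) | h r. h \<in> K \<and> r < i}"

lemma power_translatesI: "h \<in> K \<Longrightarrow> r < i \<Longrightarrow> h \<otimes> inv (t [^] (r::nat)) \<in> power_translates t i K"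
  unfolding power_translates_def by blast

lemma power_translatesE:
  assumes "w \<in> power_translates t i K"
  obtains h r where "h \<in> K" "r < i" "w = h \<otimes> inv (t [^] (r::nat))"
  using assms unfolding power_translates_def by blast

context
  fixes t K and i :: nat
  assumes t: "t \<in> carrier G" and i: "i \<ge> 1" and K: "subgroup K G" and t_i: "t [^] i \<in> K"
begin

lemma power_translates_mult:
  assumes "w \<in> power_translates t i K"
  shows "w \<otimes> t \<in> power_translates t i K"
proof -
  obtain h r where h: "h \<in> K" "r < i" and w: "w = h \<otimes> inv (t [^] r)"
    using assms by (rule power_translatesE)
  have hG: "h \<in> carrier G" using subgroup.mem_carrier[OF K h(1)] .
  show ?thesis
  proof (cases r)
    case 0
    obtain i' where i': "i = Suc i'" using i by (cases i) auto
    have "w \<otimes> t = (h \<otimes> t [^] i) \<otimes> inv (t [^] i')"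
      using t hG unfolding i' nat_pow_Suc2[OF t] by (simp add: w 0 m_assoc)
    then show ?thesis using power_translatesI[OF subgroup.m_closed[OF K h(1) t_i], of i'] i' by simp
  next
    case (Suc r')
    have "w \<otimes> t = h \<otimes> inv (t [^] r')"
      using t hG by (simp add: w Suc inv_nat_pow_Suc m_assoc)
    then show ?thesis using power_translatesI[OF h(1), of r'] h(2) Suc by simp
  qed
qed

lemma power_translates_mult_inv:
  assumes "w \<in> power_translates t i K"
  shows "w \<otimes> inv t \<in> power_translates t i K"
proof -
  obtain h r where h: "h \<in> K" "r < i" and w: "w = h \<otimes> inv (t [^] r)"
    using assms by (rule power_translatesE)
  have hG: "h \<in> carrier G" using subgroup.mem_carrier[OF K h(1)] .
  have w_inv_t: "w \<otimes> inv t = h \<otimes> inv (t [^] Suc r)"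
    using t hG by (simp add: w inv_nat_pow_Suc m_assoc)
  show ?thesis
  proof (cases "Suc r < i")
    case True
    then show ?thesis using power_translatesI[OF h(1), of "Suc r"] w_inv_t by (simp only:)
  next
    case False
    with h(2) have "Suc r = i" by simp
    then show ?thesis
      using power_translatesI[OF subgroup.m_closed[OF K h(1) subgroup.m_inv_closed[OF K t_i]], of 0]
        i t hG w_inv_t by simp
  qed
qed

lemma power_translates_mult_conj:
  assumes "w \<in> power_translates t i K" "x \<in> carrier G"
    and conj: "\<And>r. r < i \<Longrightarrow> inv (t [^] r) \<otimes> x \<otimes> t [^] r \<in> K"
  shows "w \<otimes> x \<in> power_translates t i K"
proof -
  obtain h r where h: "h \<in> K" "r < i" and w: "w = h \<otimes> inv (t [^] r)"
    using assms(1) by (rule power_translatesE)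
  have "w \<otimes> x = (h \<otimes> (inv (t [^] r) \<otimes> x \<otimes> t [^] r)) \<otimes> inv (t [^] r)"
    using t assms(2) subgroup.mem_carrier[OF K h(1)] by (simp add: w m_assoc)
  then show ?thesis
    using power_translatesI[OF subgroup.m_closed[OF K h(1) conj[OF h(2)]] h(2)] by simp
qed

lemma carrier_subset_power_translates:
  assumes S: "S \<subseteq> carrier G" and gen: "generate G (insert t S) = carrier G"
    and conj: "\<And>x r. x \<in> S \<Longrightarrow> r < i \<Longrightarrow> inv (t [^] r) \<otimes> x \<otimes> t [^] r \<in> K"
  shows "carrier G \<subseteq> power_translates t i K"
proof (rule carrier_subset_if_right_mult_closed[OF gen])
  show "insert t S \<subseteq> carrier G"
    using t S by simp
  show "power_translates t i K \<subseteq> carrier G"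
    using t subgroup.subset[OF K] by (auto simp: power_translates_def)
  show "\<one> \<in> power_translates t i K"
    using power_translatesI[OF subgroup.one_closed[OF K], of 0] i by simp
  fix w x assume w: "w \<in> power_translates t i K" and "x \<in> insert t S"
  then consider "x = t" | "x \<in> S" by auto
  then show "w \<otimes> x \<in> power_translates t i K \<and> w \<otimes> inv x \<in> power_translates t i K"
  proof cases
    case 1
    then show ?thesis using power_translates_mult[OF w] power_translates_mult_inv[OF w] by simp
  next
    case 2
    then have xG: "x \<in> carrier G" using S by auto
    have "inv (t [^] r) \<otimes> inv x \<otimes> t [^] r = inv (inv (t [^] r) \<otimes> x \<otimes> t [^] r)" for r :: nat
      using t xG by (simp add: inv_mult_group m_assoc)
    then have "inv (t [^] r) \<otimes> inv x \<otimes> t [^] r \<in> K" if "r < i" for r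
      using subgroup.m_inv_closed[OF K conj[OF 2 that]] by simp
    with 2 xG show ?thesis
      using power_translates_mult_conj[OF w] conj by simp
  qed
qed

end

end

section \<open>Rank gradient\<close>

lemma subgroup_phi_kernel:
  assumes G: "group G" and \<phi>: "\<phi> \<in> hom G integer_group"
  shows "subgroup (phi_kernel G \<phi> i) G"
proof -
  interpret \<phi>: group_hom G integer_group \<phi>
    using G \<phi> by (intro group_hom.intro group_hom_axioms.intro group_integer_group)
  show ?thesis
  proof (rule \<phi>.G.subgroupI)
    show "phi_kernel G \<phi> i \<noteq> {}"
      using \<phi>.hom_one unfolding phi_kernel_def by force
  next
    fix a b assume "a \<in> phi_kernel G \<phi> i" "b \<in> phi_kernel G \<phi> i"
    then show "inv\<^bsub>G\<^esub> a \<in> phi_kernel G \<phi> i" and "a \<otimes>\<^bsub>G\<^esub> b \<in> phi_kernel G \<phi> i"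
      unfolding phi_kernel_def by (auto simp flip: dvd_eq_mod_eq_0)
  qed (auto simp: phi_kernel_def)
qed

lemma rk_le_card:
  assumes "finite S" "S \<subseteq> carrier G" "generate G S = carrier G"
  shows "rk G \<le> card S"
  unfolding rk_def by (rule Least_le, rule exI[of _ S]) (use assms in simp)

lemma card_rcosets_phi_kernel_ge:
  assumes G: "group G" and \<phi>: "\<phi> \<in> hom G integer_group"
    and t: "t \<in> carrier G" "\<phi> t = 1"
    and fin: "finite (rcosets\<^bsub>G\<^esub> (phi_kernel G \<phi> i))"
  shows "i \<le> card (rcosets\<^bsub>G\<^esub> (phi_kernel G \<phi> i))"
proof -
  interpret \<phi>: group_hom G integer_group \<phi>
    using G \<phi> by (intro group_hom.intro group_hom_axioms.intro group_integer_group)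
  let ?K = "phi_kernel G \<phi> i"
  have K: "subgroup ?K G" by (rule subgroup_phi_kernel[OF G \<phi>])
  define f where "f j = ?K #>\<^bsub>G\<^esub> (t [^]\<^bsub>G\<^esub> (j::nat))" for j
  have image: "f ` {0..<i} \<subseteq> rcosets\<^bsub>G\<^esub> ?K"
    using t(1) unfolding f_def RCOSETS_def by auto
  have "inj_on f {0..<i}"
  proof (rule inj_onI)
    fix j j' assume j: "j \<in> {0..<i}" "j' \<in> {0..<i}" and "f j = f j'"
    moreover have "t [^]\<^bsub>G\<^esub> j \<in> f j"
      unfolding f_def using t(1) by (intro \<phi>.G.rcos_self[OF _ K]) simp
    ultimately obtain k where k: "k \<in> ?K" "t [^]\<^bsub>G\<^esub> j = k \<otimes>\<^bsub>G\<^esub> t [^]\<^bsub>G\<^esub> j'"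
      unfolding f_def r_coset_def by auto
    then have "\<phi> (t [^]\<^bsub>G\<^esub> j) = \<phi> (k \<otimes>\<^bsub>G\<^esub> t [^]\<^bsub>G\<^esub> j')" by simp
    then have "int j = \<phi> k + int j'"
      using k(1) t unfolding phi_kernel_def by (simp add: \<phi>.hom_nat_pow)
    moreover have "int i dvd \<phi> k"
      using k(1) unfolding phi_kernel_def by (simp add: dvd_eq_mod_eq_0)
    ultimately have "int i dvd int j - int j'" by simp
    with j show "j = j'"
      using dvd_imp_le_int[of "int j - int j'" "int i"] by (cases "j = j'") auto
  qed
  then have "card (f ` {0..<i}) = i"
    by (simp add: card_image)
  with card_mono[OF fin image] show ?thesis by simp
qed

text \<open>An infinite index gives \<open>card = 0\<close>, and then the quotient in the rank gradient is \<open>0\<close>.\<close>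
lemma rank_gradient_eq_0_if_rk_bounded:
  fixes C :: nat
  assumes G: "group G" and \<phi>: "\<phi> \<in> hom G integer_group"
    and t: "t \<in> carrier G" "\<phi> t = 1"
    and bounded: "\<And>i. i \<ge> 1 \<Longrightarrow> rk (G\<lparr>carrier := phi_kernel G \<phi> i\<rparr>) \<le> C"
  shows "rank_gradient G \<phi> = 0"
proof -
  define f where "f i = real (rk (G\<lparr>carrier := phi_kernel G \<phi> i\<rparr>))
      / real (card (rcosets\<^bsub>G\<^esub> (phi_kernel G \<phi> i)))" for i
  have f_bound: "f i \<le> real C / real i" if "i \<ge> 1" for i
  proof (cases "card (rcosets\<^bsub>G\<^esub> (phi_kernel G \<phi> i)) = 0")
    case False
    then have "finite (rcosets\<^bsub>G\<^esub> (phi_kernel G \<phi> i))"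
      by (meson card.infinite)
    then have "real i \<le> real (card (rcosets\<^bsub>G\<^esub> (phi_kernel G \<phi> i)))"
      using card_rcosets_phi_kernel_ge[OF G \<phi> t] by simp
    then show ?thesis
      unfolding f_def using bounded[OF that] that by (intro frac_le) simp_all
  qed (simp add: f_def)
  have "f \<longlonglongrightarrow> 0"
  proof (rule real_tendsto_sandwich[where f = "\<lambda>_. 0" and h = "\<lambda>i. real C / real i"])
    show "\<forall>\<^sub>F i in sequentially. 0 \<le> f i"
      by (simp add: f_def)
    show "\<forall>\<^sub>F i in sequentially. f i \<le> real C / real i"
      using f_bound by (auto simp: eventually_sequentially)
    show "(\<lambda>i. real C / real i) \<longlonglongrightarrow> 0"
      by (rule lim_const_over_n)
  qed simp
  then have "liminf (\<lambda>i. ereal (f i)) = ereal 0"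
    by (intro lim_imp_Liminf) (simp_all add: tendsto_ereal)
  then show ?thesis unfolding rank_gradient_def f_def by (simp add: zero_ereal_def)
qed

section \<open>Dyadic affine maps of the line\<close>

text \<open>\<open>(a, c)\<close> stands for the affine map \<open>x \<mapsto> 2\<^sup>a x + c\<close> of \<open>\<real>\<close>; the product is composition.\<close>
definition aff2 :: "(int \<times> real) monoid" where
  "aff2 = \<lparr>carrier = UNIV,
           monoid.mult = (\<lambda>p q. (fst p + fst q, 2 powr real_of_int (fst p) * snd q + snd p)),
           one = (0, 0)\<rparr>"

lemma carrier_aff2 [simp]: "carrier aff2 = UNIV"
  by (simp add: aff2_def)

lemma mult_aff2 [simp]: "(a, c) \<otimes>\<^bsub>aff2\<^esub> (b, d) = (a + b, 2 powr real_of_int a * d + c)"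
  by (simp add: aff2_def)

lemma one_aff2 [simp]: "\<one>\<^bsub>aff2\<^esub> = (0, 0)"
  by (simp add: aff2_def)

lemma group_aff2: "group aff2"
proof (rule groupI)
  fix x y z :: "int \<times> real"
  show "x \<otimes>\<^bsub>aff2\<^esub> y \<otimes>\<^bsub>aff2\<^esub> z = x \<otimes>\<^bsub>aff2\<^esub> (y \<otimes>\<^bsub>aff2\<^esub> z)"
    by (cases x, cases y, cases z) (simp add: powr_add algebra_simps)
  show "\<one>\<^bsub>aff2\<^esub> \<otimes>\<^bsub>aff2\<^esub> x = x"
    by (cases x) simp
  show "\<exists>y\<in>carrier aff2. y \<otimes>\<^bsub>aff2\<^esub> x = \<one>\<^bsub>aff2\<^esub>"
    by (cases x, rename_tac a c, rule_tac x = "(- a, - (2 powr real_of_int (- a)) * c)" in bexI)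
       (simp_all add: powr_minus_divide)
qed simp_all

lemma inv_aff2 [simp]: "inv\<^bsub>aff2\<^esub> (a, c) = (- a, - (2 powr real_of_int (- a)) * c)"
  by (rule group.inv_equality[OF group_aff2]) (simp_all add: powr_minus_divide)

lemma fst_hom_aff2: "fst \<in> hom aff2 integer_group"
  by (rule homI) (auto simp: aff2_def)

lemma fst_nat_pow_aff2: "fst (p [^]\<^bsub>aff2\<^esub> (k::nat)) = int k * fst p"
  by (induction k) (auto simp: aff2_def algebra_simps)

lemma aff2_conj_eq:
  assumes "fst p = 1" and "fst q = 0"
    and "fst (p [^]\<^bsub>aff2\<^esub> (k::nat) \<otimes>\<^bsub>aff2\<^esub> q \<otimes>\<^bsub>aff2\<^esub> inv\<^bsub>aff2\<^esub> (p [^]\<^bsub>aff2\<^esub> (m::nat))) = 0"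
  shows "k = m"
    and "snd (p [^]\<^bsub>aff2\<^esub> k \<otimes>\<^bsub>aff2\<^esub> q \<otimes>\<^bsub>aff2\<^esub> inv\<^bsub>aff2\<^esub> (p [^]\<^bsub>aff2\<^esub> m)) = 2 ^ k * snd q"
proof -
  obtain d where d: "p [^]\<^bsub>aff2\<^esub> k = (int k, d)"
    using fst_nat_pow_aff2[of p k] assms(1) by (metis prod.collapse mult.right_neutral)
  obtain e where e: "p [^]\<^bsub>aff2\<^esub> m = (int m, e)"
    using fst_nat_pow_aff2[of p m] assms(1) by (metis prod.collapse mult.right_neutral)
  obtain c where q: "q = (0, c)" using assms(2) by (metis prod.collapse)
  show km: "k = m" using assms(3) by (simp add: d e q)
  with d e have "d = e" by simp
  moreover have "(2::real) powr real k * 2 powr (- real k) = 1" by (simp flip: powr_add)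
  ultimately show "snd (p [^]\<^bsub>aff2\<^esub> k \<otimes>\<^bsub>aff2\<^esub> q \<otimes>\<^bsub>aff2\<^esub> inv\<^bsub>aff2\<^esub> (p [^]\<^bsub>aff2\<^esub> m)) = 2 ^ k * snd q"
    using km by (simp add: d e q algebra_simps powr_realpow)
qed

definition dyadic_level :: "nat \<Rightarrow> real set" where
  "dyadic_level M = range (\<lambda>z::int. of_int z / 2 ^ M)"

definition dyadic :: "real set" where
  "dyadic = (\<Union>M. dyadic_level M)"

lemma zero_in_dyadic: "0 \<in> dyadic" and one_in_dyadic: "1 \<in> dyadic"
  unfolding dyadic_def dyadic_level_def by (auto intro!: exI[of _ 0] image_eqI[of _ _ 0] image_eqI[of _ _ 1])

lemma dyadic_level_mono: "M \<le> M' \<Longrightarrow> dyadic_level M \<subseteq> dyadic_level M'"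
proof
  fix c assume "M \<le> M'" "c \<in> dyadic_level M"
  then obtain z where z: "c = of_int z / 2 ^ M" unfolding dyadic_level_def by blast
  have "(2::real) ^ M' = 2 ^ M * 2 ^ (M' - M)" using \<open>M \<le> M'\<close> by (simp flip: power_add)
  then have "c = of_int (z * 2 ^ (M' - M)) / 2 ^ M'" using z by simp
  then show "c \<in> dyadic_level M'" unfolding dyadic_level_def by blast
qed

lemma finite_subset_dyadic_level:
  assumes "finite D" "D \<subseteq> dyadic"
  shows "\<exists>M. D \<subseteq> dyadic_level M"
  using assms
proof (induction D rule: finite_induct)
  case (insert c D)
  then obtain M M' where "D \<subseteq> dyadic_level M" "c \<in> dyadic_level M'"
    unfolding dyadic_def by blast
  then have "insert c D \<subseteq> dyadic_level (max M M')"
    using dyadic_level_mono[of M "max M M'"] dyadic_level_mono[of M' "max M M'"] by auto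
  then show ?case by blast
qed simp

lemma two_power_mult_dyadic_level: "c \<in> dyadic_level M \<Longrightarrow> 2 ^ k * c \<in> dyadic_level M"
proof -
  assume "c \<in> dyadic_level M"
  then obtain z :: int where "c = of_int z / 2 ^ M" unfolding dyadic_level_def by blast
  then have "2 ^ k * c = of_int (2 ^ k * z) / 2 ^ M" by simp
  then show ?thesis unfolding dyadic_level_def by blast
qed

lemma inverse_two_power_Suc_notin_dyadic_level: "1 / 2 ^ Suc M \<notin> dyadic_level M"
proof
  assume "1 / 2 ^ Suc M \<in> dyadic_level M"
  then obtain z :: int where "1 / 2 ^ Suc M = of_int z / (2::real) ^ M"
    unfolding dyadic_level_def by blast
  then have "(1::real) = of_int (2 * z)" by (simp add: field_simps)
  then have "1 = 2 * z" by linarith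
  then show False by presburger
qed

lemma powr_mult_dyadic: "c \<in> dyadic \<Longrightarrow> 2 powr real_of_int n * c \<in> dyadic"
proof -
  assume "c \<in> dyadic"
  then obtain M z where z: "c = of_int z / 2 ^ M" unfolding dyadic_def dyadic_level_def by blast
  show ?thesis
  proof (cases "n \<ge> 0")
    case True
    then have "2 powr real_of_int n = (2::real) ^ nat n"
      by (metis of_nat_nat powr_realpow zero_less_numeral)
    then have "2 powr real_of_int n * c = of_int (2 ^ nat n * z) / 2 ^ M" using z by simp
    then show ?thesis unfolding dyadic_def dyadic_level_def by blast
  next
    case False
    then have "2 powr real_of_int n = 1 / (2::real) ^ nat (- n)"
      by (simp add: powr_minus_divide[symmetric] powr_realpow[symmetric])
    then have "2 powr real_of_int n * c = of_int z / 2 ^ (M + nat (- n))" using z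
      by (simp add: power_add)
    then show ?thesis unfolding dyadic_def dyadic_level_def by blast
  qed
qed

lemma add_dyadic: "c \<in> dyadic \<Longrightarrow> d \<in> dyadic \<Longrightarrow> c + d \<in> dyadic"
proof -
  assume "c \<in> dyadic" "d \<in> dyadic"
  then obtain M where "c \<in> dyadic_level M" "d \<in> dyadic_level M"
    using finite_subset_dyadic_level[of "{c, d}"] by auto
  then obtain z w :: int where "c = of_int z / 2 ^ M" "d = of_int w / 2 ^ M"
    unfolding dyadic_level_def by blast
  then have "c + d = of_int (z + w) / 2 ^ M" by (simp add: add_divide_distrib)
  then show ?thesis unfolding dyadic_def dyadic_level_def by blast
qed

lemma uminus_dyadic: "c \<in> dyadic \<Longrightarrow> - c \<in> dyadic"
proof -
  assume "c \<in> dyadic"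
  then obtain M and z :: int where "c = of_int z / 2 ^ M"
    unfolding dyadic_def dyadic_level_def by blast
  then have "- c = of_int (- z) / 2 ^ M" by simp
  then show ?thesis unfolding dyadic_def dyadic_level_def by blast
qed

lemma subgroup_aff2_dyadic: "subgroup ((UNIV :: int set) \<times> dyadic) aff2"
proof (rule group.subgroupI[OF group_aff2])
  show "(UNIV :: int set) \<times> dyadic \<noteq> {}" using zero_in_dyadic by blast
next
  fix p q :: "int \<times> real" assume "p \<in> UNIV \<times> dyadic" "q \<in> UNIV \<times> dyadic"
  then show "p \<otimes>\<^bsub>aff2\<^esub> q \<in> UNIV \<times> dyadic"
    by (cases p, cases q) (auto intro: add_dyadic powr_mult_dyadic)
  from \<open>p \<in> UNIV \<times> dyadic\<close> obtain a c where p: "p = (a, c)" and "c \<in> dyadic" by auto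
  then show "inv\<^bsub>aff2\<^esub> p \<in> UNIV \<times> dyadic"
    using uminus_dyadic[OF powr_mult_dyadic, of c "- a"] by simp
qed auto

lemma subgroup_aff2_dyadic_level: "subgroup ({0::int} \<times> dyadic_level M) aff2"
proof (rule group.subgroupI[OF group_aff2])
  have "0 \<in> dyadic_level M" unfolding dyadic_level_def by (auto intro: image_eqI[of 0 _ 0])
  then show "{0::int} \<times> dyadic_level M \<noteq> {}" by blast
next
  fix p q :: "int \<times> real" assume "p \<in> {0} \<times> dyadic_level M" "q \<in> {0} \<times> dyadic_level M"
  then obtain z w :: int where "p = (0, of_int z / 2 ^ M)" "q = (0, of_int w / 2 ^ M)"
    unfolding dyadic_level_def by auto
  then show "p \<otimes>\<^bsub>aff2\<^esub> q \<in> {0} \<times> dyadic_level M"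
    unfolding dyadic_level_def by (auto intro!: image_eqI[of _ _ "w + z"] simp: add_divide_distrib)
  from \<open>p = (0, of_int z / 2 ^ M)\<close> show "inv\<^bsub>aff2\<^esub> p \<in> {0} \<times> dyadic_level M"
    unfolding dyadic_level_def by (auto intro!: image_eqI[of _ _ "- z"])
qed auto

text \<open>Write \<open>g = u\<^sup>k b u\<^sup>-\<^sup>m\<close>; if \<open>\<rho>(g)\<close> is a translation then \<open>k = m\<close>, and it translates by
  \<open>2\<^sup>k\<close> times the translation \<open>\<rho>(b)\<close>.\<close>
lemma translation_in_dyadic_level_if_ascending:
  assumes G: "group G" and \<rho>: "\<rho> \<in> hom G aff2"
    and u: "u \<in> carrier G" and K: "subgroup K G"
    and conj: "\<And>b. b \<in> K \<Longrightarrow> inv\<^bsub>G\<^esub> u \<otimes>\<^bsub>G\<^esub> b \<otimes>\<^bsub>G\<^esub> u \<in> K"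
    and gen: "generate G (insert u K) = carrier G"
    and slope: "fst (\<rho> u) = 1" and level: "\<rho> ` K \<subseteq> {0} \<times> dyadic_level M"
    and g: "g \<in> carrier G" "fst (\<rho> g) = 0"
  shows "snd (\<rho> g) \<in> dyadic_level M"
proof -
  interpret \<rho>: group_hom G aff2 \<rho>
    using G \<rho> by (intro group_hom.intro group_hom_axioms.intro group_aff2)
  have "g \<in> \<rho>.G.ascending_words u K"
    using \<rho>.G.carrier_subset_ascending_words[OF u K conj gen] g(1) by blast
  then obtain k m b where b: "b \<in> K"
    and gkmb: "g = u [^]\<^bsub>G\<^esub> (k::nat) \<otimes>\<^bsub>G\<^esub> b \<otimes>\<^bsub>G\<^esub> inv\<^bsub>G\<^esub> (u [^]\<^bsub>G\<^esub> (m::nat))"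
    by (rule \<rho>.G.ascending_wordsE)
  have "b \<in> carrier G" using b subgroup.subset[OF K] by auto
  then have \<rho>g: "\<rho> g = \<rho> u [^]\<^bsub>aff2\<^esub> k \<otimes>\<^bsub>aff2\<^esub> \<rho> b \<otimes>\<^bsub>aff2\<^esub> inv\<^bsub>aff2\<^esub> (\<rho> u [^]\<^bsub>aff2\<^esub> m)"
    using u by (simp add: gkmb \<rho>.hom_nat_pow)
  have \<rho>b: "fst (\<rho> b) = 0" "snd (\<rho> b) \<in> dyadic_level M"
    using level b by auto
  have "snd (\<rho> g) = 2 ^ k * snd (\<rho> b)"
    using aff2_conj_eq(2)[OF slope \<rho>b(1)] g(2) unfolding \<rho>g by blast
  with \<rho>b(2) show ?thesis by (simp add: two_power_mult_dyadic_level)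
qed

lemma dyadic_image_bounded_if_fin_gen:
  assumes G: "group G" and \<rho>: "\<rho> \<in> hom G aff2" and image: "\<rho> ` carrier G \<subseteq> UNIV \<times> dyadic"
    and S: "finite S" "S \<subseteq> carrier G" and fst_S: "\<And>s. s \<in> S \<Longrightarrow> fst (\<rho> s) = 0"
  shows "\<exists>M. \<rho> ` generate G S \<subseteq> {0} \<times> dyadic_level M"
proof -
  have "\<rho> s \<in> UNIV \<times> dyadic" if "s \<in> S" for s
    using that S(2) image by blast
  then have "snd ` \<rho> ` S \<subseteq> dyadic" by (simp add: image_subset_iff mem_Times_iff)
  with S(1) obtain M where M: "snd ` \<rho> ` S \<subseteq> dyadic_level M"
    using finite_subset_dyadic_level[of "snd ` \<rho> ` S"] by auto
  have "\<rho> ` S \<subseteq> {0} \<times> dyadic_level M"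
  proof
    fix p assume "p \<in> \<rho> ` S"
    with M fst_S show "p \<in> {0} \<times> dyadic_level M"
      by (auto simp: mem_Times_iff)
  qed
  interpret \<rho>: group_hom G aff2 \<rho>
    using G \<rho> by (intro group_hom.intro group_hom_axioms.intro group_aff2)
  from \<open>\<rho> ` S \<subseteq> {0} \<times> dyadic_level M\<close> have "generate aff2 (\<rho> ` S) \<subseteq> {0} \<times> dyadic_level M"
    by (rule \<rho>.H.generate_subgroup_incl[OF _ subgroup_aff2_dyadic_level])
  then show ?thesis using \<rho>.generate_img[OF S(2)] by auto
qed

section \<open>The group \<open>\<pi>\<close> and two affine actions\<close>

abbreviation "pi_t \<equiv> pres_gen pi_rels T"
abbreviation "pi_a \<equiv> pres_gen pi_rels A"
abbreviation "pi_b \<equiv> pres_gen pi_rels B"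

lemma group_pi: "group pi_group"
  unfolding pi_group_def by (rule group_presented_group)

interpretation pi: group pi_group
  by (rule group_pi)

lemma pi_gens_in_carrier [simp]: "pi_t \<in> carrier pi_group" "pi_a \<in> carrier pi_group" "pi_b \<in> carrier pi_group"
  unfolding pi_group_def by simp_all

lemma generate_pi_gens: "generate pi_group {pi_t, pi_a, pi_b} = carrier pi_group"
proof -
  have "UNIV = {T, A, B}"
    using pi_gen.exhaust by blast
  then have "range (pres_gen pi_rels) = {pi_t, pi_a, pi_b}"
    by (metis image_empty image_insert)
  then show ?thesis
    using generate_pres_gen[of pi_rels] unfolding pi_group_def by simp
qed

lemma pi_relator_eq:
  assumes "r \<in> pi_rels"
  shows "word_eval pi_group (pres_gen pi_rels) r = \<one>\<^bsub>pi_group\<^esub>"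
  using word_eval_relator[OF assms] unfolding pi_group_def .

lemma pi_conj_t_a: "inv\<^bsub>pi_group\<^esub> pi_t \<otimes>\<^bsub>pi_group\<^esub> pi_a \<otimes>\<^bsub>pi_group\<^esub> pi_t = pi_a \<otimes>\<^bsub>pi_group\<^esub> pi_a"
proof -
  have "inv\<^bsub>pi_group\<^esub> pi_t \<otimes>\<^bsub>pi_group\<^esub> (pi_a \<otimes>\<^bsub>pi_group\<^esub> (pi_t \<otimes>\<^bsub>pi_group\<^esub>
      (inv\<^bsub>pi_group\<^esub> pi_a \<otimes>\<^bsub>pi_group\<^esub> (inv\<^bsub>pi_group\<^esub> pi_a \<otimes>\<^bsub>pi_group\<^esub> \<one>\<^bsub>pi_group\<^esub>))))
      = \<one>\<^bsub>pi_group\<^esub>"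
    using pi_relator_eq[of "[(T, False), (A, True), (T, True), (A, False), (A, False)]"]
    by (simp add: pi_rels_def)
  then have "(inv\<^bsub>pi_group\<^esub> pi_t \<otimes>\<^bsub>pi_group\<^esub> pi_a \<otimes>\<^bsub>pi_group\<^esub> pi_t)
      \<otimes>\<^bsub>pi_group\<^esub> inv\<^bsub>pi_group\<^esub> (pi_a \<otimes>\<^bsub>pi_group\<^esub> pi_a) = \<one>\<^bsub>pi_group\<^esub>"
    by (simp add: pi.m_assoc pi.inv_mult_group)
  then show ?thesis by (simp add: pi.inv_solve_right')
qed

lemma pi_conj_t_b: "inv\<^bsub>pi_group\<^esub> pi_t \<otimes>\<^bsub>pi_group\<^esub> (pi_b \<otimes>\<^bsub>pi_group\<^esub> pi_b) \<otimes>\<^bsub>pi_group\<^esub> pi_t = pi_b"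
proof -
  have "inv\<^bsub>pi_group\<^esub> pi_t \<otimes>\<^bsub>pi_group\<^esub> (pi_b \<otimes>\<^bsub>pi_group\<^esub> (pi_b \<otimes>\<^bsub>pi_group\<^esub>
      (pi_t \<otimes>\<^bsub>pi_group\<^esub> (inv\<^bsub>pi_group\<^esub> pi_b \<otimes>\<^bsub>pi_group\<^esub> \<one>\<^bsub>pi_group\<^esub>))))
      = \<one>\<^bsub>pi_group\<^esub>"
    using pi_relator_eq[of "[(T, False), (B, True), (B, True), (T, True), (B, False)]"]
    by (simp add: pi_rels_def)
  then have "(inv\<^bsub>pi_group\<^esub> pi_t \<otimes>\<^bsub>pi_group\<^esub> (pi_b \<otimes>\<^bsub>pi_group\<^esub> pi_b) \<otimes>\<^bsub>pi_group\<^esub> pi_t)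
      \<otimes>\<^bsub>pi_group\<^esub> inv\<^bsub>pi_group\<^esub> pi_b = \<one>\<^bsub>pi_group\<^esub>"
    by (simp add: pi.m_assoc)
  then show ?thesis by (simp add: pi.inv_solve_right')
qed

definition rep_b_gen :: "pi_gen \<Rightarrow> int \<times> real" where
  "rep_b_gen x = (case x of T \<Rightarrow> (1, 0) | A \<Rightarrow> (0, 0) | B \<Rightarrow> (0, 1))"

definition rep_a_gen :: "pi_gen \<Rightarrow> int \<times> real" where
  "rep_a_gen x = (case x of T \<Rightarrow> (- 1, 0) | A \<Rightarrow> (0, 1) | B \<Rightarrow> (0, 0))"

definition rep_b :: "pi_gen word set \<Rightarrow> int \<times> real" where
  "rep_b = pres_lift pi_rels aff2 rep_b_gen"

definition rep_a :: "pi_gen word set \<Rightarrow> int \<times> real" where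
  "rep_a = pres_lift pi_rels aff2 rep_a_gen"

lemma rep_b_gen_relators: "r \<in> pi_rels \<Longrightarrow> word_eval aff2 rep_b_gen r = \<one>\<^bsub>aff2\<^esub>"
  by (auto simp: pi_rels_def rep_b_gen_def powr_minus_divide)

lemma rep_a_gen_relators: "r \<in> pi_rels \<Longrightarrow> word_eval aff2 rep_a_gen r = \<one>\<^bsub>aff2\<^esub>"
  by (auto simp: pi_rels_def rep_a_gen_def powr_minus_divide)

lemma rep_b_hom: "rep_b \<in> hom pi_group aff2"
  unfolding rep_b_def pi_group_def by (rule pres_lift_hom[OF group_aff2 _ rep_b_gen_relators]) simp

lemma rep_a_hom: "rep_a \<in> hom pi_group aff2"
  unfolding rep_a_def pi_group_def by (rule pres_lift_hom[OF group_aff2 _ rep_a_gen_relators]) simp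

lemma rep_b_gens [simp]: "rep_b pi_t = (1, 0)" "rep_b pi_a = (0, 0)" "rep_b pi_b = (0, 1)"
  unfolding rep_b_def
  by (simp_all add: pres_lift_pres_gen[OF group_aff2 _ rep_b_gen_relators] rep_b_gen_def)

lemma rep_a_gens [simp]: "rep_a pi_t = (- 1, 0)" "rep_a pi_a = (0, 1)" "rep_a pi_b = (0, 0)"
  unfolding rep_a_def
  by (simp_all add: pres_lift_pres_gen[OF group_aff2 _ rep_a_gen_relators] rep_a_gen_def)

lemma hom_pi_aff2_dyadic:
  assumes \<rho>: "\<rho> \<in> hom pi_group aff2" and gens: "\<rho> ` {pi_t, pi_a, pi_b} \<subseteq> UNIV \<times> dyadic"
  shows "\<rho> ` carrier pi_group \<subseteq> UNIV \<times> dyadic"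
proof -
  interpret \<rho>: group_hom pi_group aff2 \<rho>
    using \<rho> by (intro group_hom.intro group_hom_axioms.intro group_pi group_aff2)
  have "generate aff2 (\<rho> ` {pi_t, pi_a, pi_b}) \<subseteq> UNIV \<times> dyadic"
    by (rule \<rho>.H.generate_subgroup_incl[OF gens subgroup_aff2_dyadic])
  then show ?thesis
    using \<rho>.generate_img[of "{pi_t, pi_a, pi_b}"] by (simp add: generate_pi_gens)
qed

lemma rep_b_dyadic: "rep_b ` carrier pi_group \<subseteq> UNIV \<times> dyadic"
  by (rule hom_pi_aff2_dyadic[OF rep_b_hom]) (simp add: zero_in_dyadic one_in_dyadic)

lemma rep_a_dyadic: "rep_a ` carrier pi_group \<subseteq> UNIV \<times> dyadic"
  by (rule hom_pi_aff2_dyadic[OF rep_a_hom]) (simp add: zero_in_dyadic one_in_dyadic)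

lemma rep_b_translation: "\<exists>g\<in>carrier pi_group. rep_b g = (0, 1 / 2 ^ N)"
proof (induction N)
  case 0
  show ?case by (rule bexI[of _ pi_b]) simp_all
next
  case (Suc N)
  then obtain g where g: "g \<in> carrier pi_group" "rep_b g = (0, 1 / 2 ^ N)" by blast
  interpret rep_b: group_hom pi_group aff2 rep_b
    by (intro group_hom.intro group_hom_axioms.intro group_pi group_aff2 rep_b_hom)
  have "rep_b (inv\<^bsub>pi_group\<^esub> pi_t \<otimes>\<^bsub>pi_group\<^esub> g \<otimes>\<^bsub>pi_group\<^esub> pi_t) = (0, 1 / 2 ^ Suc N)"
    using g by (simp add: powr_minus_divide)
  with g show ?case by (intro bexI[of _ "inv\<^bsub>pi_group\<^esub> pi_t \<otimes>\<^bsub>pi_group\<^esub> g \<otimes>\<^bsub>pi_group\<^esub> pi_t"]) simp_all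
qed

lemma rep_a_translation: "\<exists>g\<in>carrier pi_group. rep_a g = (0, 1 / 2 ^ N)"
proof (induction N)
  case 0
  show ?case by (rule bexI[of _ pi_a]) simp_all
next
  case (Suc N)
  then obtain g where g: "g \<in> carrier pi_group" "rep_a g = (0, 1 / 2 ^ N)" by blast
  interpret rep_a: group_hom pi_group aff2 rep_a
    by (intro group_hom.intro group_hom_axioms.intro group_pi group_aff2 rep_a_hom)
  have "rep_a (pi_t \<otimes>\<^bsub>pi_group\<^esub> g \<otimes>\<^bsub>pi_group\<^esub> inv\<^bsub>pi_group\<^esub> pi_t) = (0, 1 / 2 ^ Suc N)"
    using g by (simp add: powr_minus_divide)
  with g show ?case by (intro bexI[of _ "pi_t \<otimes>\<^bsub>pi_group\<^esub> g \<otimes>\<^bsub>pi_group\<^esub> inv\<^bsub>pi_group\<^esub> pi_t"]) simp_all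
qed

lemma pi_conj_pow_t_a:
  "inv\<^bsub>pi_group\<^esub> (pi_t [^]\<^bsub>pi_group\<^esub> r) \<otimes>\<^bsub>pi_group\<^esub> pi_a \<otimes>\<^bsub>pi_group\<^esub> pi_t [^]\<^bsub>pi_group\<^esub> r
    = pi_a [^]\<^bsub>pi_group\<^esub> (2 ^ r :: nat)"
  using pi_conj_t_a by (intro pi.conj_pow_iterate) (simp_all add: numeral_2_eq_2)

lemma pi_conj_pow_t_b:
  assumes "r \<le> j"
  shows "inv\<^bsub>pi_group\<^esub> (pi_t [^]\<^bsub>pi_group\<^esub> r) \<otimes>\<^bsub>pi_group\<^esub> pi_b \<otimes>\<^bsub>pi_group\<^esub> pi_t [^]\<^bsub>pi_group\<^esub> r
    = (inv\<^bsub>pi_group\<^esub> (pi_t [^]\<^bsub>pi_group\<^esub> j) \<otimes>\<^bsub>pi_group\<^esub> pi_b \<otimes>\<^bsub>pi_group\<^esub> pi_t [^]\<^bsub>pi_group\<^esub> j)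
        [^]\<^bsub>pi_group\<^esub> (2 ^ (j - r) :: nat)"
  using pi_conj_t_b assms by (intro pi.conj_root_iterate) (simp_all add: numeral_2_eq_2)

definition pi_kernel_gens :: "nat \<Rightarrow> pi_gen word set set" where
  "pi_kernel_gens i = {pi_t [^]\<^bsub>pi_group\<^esub> i, pi_a,
    inv\<^bsub>pi_group\<^esub> (pi_t [^]\<^bsub>pi_group\<^esub> (i - 1)) \<otimes>\<^bsub>pi_group\<^esub> pi_b \<otimes>\<^bsub>pi_group\<^esub> pi_t [^]\<^bsub>pi_group\<^esub> (i - 1)}"

lemma pi_kernel_gens_carrier: "pi_kernel_gens i \<subseteq> carrier pi_group"
  by (simp add: pi_kernel_gens_def)

lemma pi_carrier_subset_power_translates:
  assumes i: "i \<ge> 1"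
  shows "carrier pi_group \<subseteq> pi.power_translates pi_t i (generate pi_group (pi_kernel_gens i))"
    (is "_ \<subseteq> pi.power_translates pi_t i ?H")
proof (rule pi.carrier_subset_power_translates[OF _ i _ _ _ generate_pi_gens])
  have H: "subgroup ?H pi_group" by (rule pi.generate_is_subgroup[OF pi_kernel_gens_carrier])
  have in_H: "x \<in> ?H" if "x \<in> pi_kernel_gens i" for x using that by (rule generate.incl)
  show "pi_t [^]\<^bsub>pi_group\<^esub> i \<in> ?H" by (rule in_H) (simp add: pi_kernel_gens_def)
  fix x r assume x: "x \<in> {pi_a, pi_b}" and "r < i"
  then have "r \<le> i - 1" by simp
  then have "inv\<^bsub>pi_group\<^esub> (pi_t [^]\<^bsub>pi_group\<^esub> r) \<otimes>\<^bsub>pi_group\<^esub> pi_b \<otimes>\<^bsub>pi_group\<^esub> pi_t [^]\<^bsub>pi_group\<^esub> r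
      = (inv\<^bsub>pi_group\<^esub> (pi_t [^]\<^bsub>pi_group\<^esub> (i - 1)) \<otimes>\<^bsub>pi_group\<^esub> pi_b \<otimes>\<^bsub>pi_group\<^esub> pi_t [^]\<^bsub>pi_group\<^esub> (i - 1))
        [^]\<^bsub>pi_group\<^esub> (2 ^ (i - 1 - r) :: nat)"
    by (rule pi_conj_pow_t_b)
  with x show "inv\<^bsub>pi_group\<^esub> (pi_t [^]\<^bsub>pi_group\<^esub> r) \<otimes>\<^bsub>pi_group\<^esub> x \<otimes>\<^bsub>pi_group\<^esub> pi_t [^]\<^bsub>pi_group\<^esub> r \<in> ?H"
    using pi_conj_pow_t_a pi.subgroup_nat_pow_closed[OF H] in_H by (auto simp: pi_kernel_gens_def)
qed (simp_all add: pi.generate_is_subgroup[OF pi_kernel_gens_carrier])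

section \<open>HNN extensions\<close>

lemma group_HNN: "group (HNN Bg Ap \<theta>)"
  unfolding HNN_def by (rule group_presented_group)

lemma HNN_base_in_carrier [simp]: "HNN_base Bg Ap \<theta> x \<in> carrier (HNN Bg Ap \<theta>)"
  unfolding HNN_def HNN_base_def by simp

lemma HNN_stable_in_carrier [simp]: "HNN_stable Bg Ap \<theta> \<in> carrier (HNN Bg Ap \<theta>)"
  unfolding HNN_def HNN_stable_def by simp

lemma pres_gen_HNN_rels [simp]:
  "pres_gen (HNN_rels Bg Ap \<theta>) (Some x) = HNN_base Bg Ap \<theta> x"
  "pres_gen (HNN_rels Bg Ap \<theta>) None = HNN_stable Bg Ap \<theta>"
  by (simp_all add: HNN_base_def HNN_stable_def)

lemma HNN_relator_eq:
  "r \<in> HNN_rels Bg Ap \<theta> \<Longrightarrow>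
    word_eval (HNN Bg Ap \<theta>) (pres_gen (HNN_rels Bg Ap \<theta>)) r = \<one>\<^bsub>HNN Bg Ap \<theta>\<^esub>"
  unfolding HNN_def by (rule word_eval_relator)

lemma HNN_base_notin_carrier:
  assumes "x \<notin> carrier Bg"
  shows "HNN_base Bg Ap \<theta> x = \<one>\<^bsub>HNN Bg Ap \<theta>\<^esub>"
proof -
  interpret group "HNN Bg Ap \<theta>" by (rule group_HNN)
  have "[(Some x, True)] \<in> HNN_rels Bg Ap \<theta>"
    using assms by (simp add: HNN_rels_def)
  from HNN_relator_eq[OF this] show ?thesis by simp
qed

lemma HNN_base_mult:
  assumes "x \<in> carrier Bg" "y \<in> carrier Bg"
  shows "HNN_base Bg Ap \<theta> x \<otimes>\<^bsub>HNN Bg Ap \<theta>\<^esub> HNN_base Bg Ap \<theta> y = HNN_base Bg Ap \<theta> (x \<otimes>\<^bsub>Bg\<^esub> y)"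
proof -
  interpret group "HNN Bg Ap \<theta>" by (rule group_HNN)
  have "HNN_base Bg Ap \<theta> x \<otimes>\<^bsub>HNN Bg Ap \<theta>\<^esub> (HNN_base Bg Ap \<theta> y \<otimes>\<^bsub>HNN Bg Ap \<theta>\<^esub>
      (inv\<^bsub>HNN Bg Ap \<theta>\<^esub> HNN_base Bg Ap \<theta> (x \<otimes>\<^bsub>Bg\<^esub> y) \<otimes>\<^bsub>HNN Bg Ap \<theta>\<^esub> \<one>\<^bsub>HNN Bg Ap \<theta>\<^esub>))
      = \<one>\<^bsub>HNN Bg Ap \<theta>\<^esub>"
  proof (rule HNN_relator_eq[of "[(Some x, True), (Some y, True), (Some (x \<otimes>\<^bsub>Bg\<^esub> y), False)]",
      simplified])
    show "[(Some x, True), (Some y, True), (Some (x \<otimes>\<^bsub>Bg\<^esub> y), False)] \<in> HNN_rels Bg Ap \<theta>"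
      using assms unfolding HNN_rels_def by blast
  qed
  then have "(HNN_base Bg Ap \<theta> x \<otimes>\<^bsub>HNN Bg Ap \<theta>\<^esub> HNN_base Bg Ap \<theta> y)
      \<otimes>\<^bsub>HNN Bg Ap \<theta>\<^esub> inv\<^bsub>HNN Bg Ap \<theta>\<^esub> HNN_base Bg Ap \<theta> (x \<otimes>\<^bsub>Bg\<^esub> y) = \<one>\<^bsub>HNN Bg Ap \<theta>\<^esub>"
    by (simp add: m_assoc)
  then show ?thesis by (simp add: inv_solve_right')
qed

lemma HNN_base_hom: "HNN_base Bg Ap \<theta> \<in> hom Bg (HNN Bg Ap \<theta>)"
  by (rule homI) (simp_all add: HNN_base_mult)

lemma HNN_stable_conj:
  assumes "a \<in> Ap"
  shows "inv\<^bsub>HNN Bg Ap \<theta>\<^esub> HNN_stable Bg Ap \<theta> \<otimes>\<^bsub>HNN Bg Ap \<theta>\<^esub> HNN_base Bg Ap \<theta> a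
      \<otimes>\<^bsub>HNN Bg Ap \<theta>\<^esub> HNN_stable Bg Ap \<theta> = HNN_base Bg Ap \<theta> (\<theta> a)"
proof -
  interpret group "HNN Bg Ap \<theta>" by (rule group_HNN)
  have "inv\<^bsub>HNN Bg Ap \<theta>\<^esub> HNN_stable Bg Ap \<theta> \<otimes>\<^bsub>HNN Bg Ap \<theta>\<^esub> (HNN_base Bg Ap \<theta> a \<otimes>\<^bsub>HNN Bg Ap \<theta>\<^esub>
      (HNN_stable Bg Ap \<theta> \<otimes>\<^bsub>HNN Bg Ap \<theta>\<^esub>
      (inv\<^bsub>HNN Bg Ap \<theta>\<^esub> HNN_base Bg Ap \<theta> (\<theta> a) \<otimes>\<^bsub>HNN Bg Ap \<theta>\<^esub> \<one>\<^bsub>HNN Bg Ap \<theta>\<^esub>)))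
      = \<one>\<^bsub>HNN Bg Ap \<theta>\<^esub>"
  proof (rule HNN_relator_eq[of "[(None, False), (Some a, True), (None, True), (Some (\<theta> a), False)]",
      simplified])
    show "[(None, False), (Some a, True), (None, True), (Some (\<theta> a), False)] \<in> HNN_rels Bg Ap \<theta>"
      using assms unfolding HNN_rels_def by blast
  qed
  then have "(inv\<^bsub>HNN Bg Ap \<theta>\<^esub> HNN_stable Bg Ap \<theta> \<otimes>\<^bsub>HNN Bg Ap \<theta>\<^esub> HNN_base Bg Ap \<theta> a
      \<otimes>\<^bsub>HNN Bg Ap \<theta>\<^esub> HNN_stable Bg Ap \<theta>)
      \<otimes>\<^bsub>HNN Bg Ap \<theta>\<^esub> inv\<^bsub>HNN Bg Ap \<theta>\<^esub> HNN_base Bg Ap \<theta> (\<theta> a) = \<one>\<^bsub>HNN Bg Ap \<theta>\<^esub>"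
    by (simp add: m_assoc)
  then show ?thesis by (simp add: inv_solve_right')
qed

lemma generate_HNN:
  "generate (HNN Bg Ap \<theta>) (insert (HNN_stable Bg Ap \<theta>) (HNN_base Bg Ap \<theta> ` carrier Bg))
    = carrier (HNN Bg Ap \<theta>)"
  (is "generate ?H ?X = _")
proof -
  interpret group ?H by (rule group_HNN)
  have "range (pres_gen (HNN_rels Bg Ap \<theta>)) \<subseteq> generate ?H ?X"
  proof
    fix g assume "g \<in> range (pres_gen (HNN_rels Bg Ap \<theta>))"
    then obtain x where g: "g = pres_gen (HNN_rels Bg Ap \<theta>) x" by blast
    show "g \<in> generate ?H ?X"
    proof (cases x)
      case None
      then show ?thesis by (simp add: g generate.incl)
    next
      case (Some y)
      then show ?thesis
        using HNN_base_notin_carrier[of y Bg Ap \<theta>] generate.one[of ?H ?X] generate.incl[of _ ?X ?H]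
        by (cases "y \<in> carrier Bg") (auto simp: g)
    qed
  qed
  then have "generate ?H (range (pres_gen (HNN_rels Bg Ap \<theta>))) \<subseteq> generate ?H ?X"
    by (intro generate_subgroup_incl generate_is_subgroup) auto
  moreover have "generate ?H ?X \<subseteq> carrier ?H"
    by (intro generate_incl) auto
  ultimately show ?thesis
    using generate_pres_gen[of "HNN_rels Bg Ap \<theta>"] unfolding HNN_def by auto
qed

lemma generate_iso_HNN:
  assumes G: "group G" and \<psi>: "\<psi> \<in> iso (HNN Bg Ap \<theta>) G"
  shows "generate G (insert (\<psi> (HNN_stable Bg Ap \<theta>)) (\<psi> ` HNN_base Bg Ap \<theta> ` carrier Bg)) = carrier G"
proof -
  interpret \<psi>: group_hom "HNN Bg Ap \<theta>" G \<psi>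
    using G iso_imp_homomorphism[OF \<psi>] by (intro group_hom.intro group_hom_axioms.intro group_HNN)
  have "\<psi> ` carrier (HNN Bg Ap \<theta>) = carrier G"
    using \<psi> by (simp add: iso_iff)
  then show ?thesis
    using \<psi>.generate_img[of "insert (HNN_stable Bg Ap \<theta>) (HNN_base Bg Ap \<theta> ` carrier Bg)"]
    by (simp add: generate_HNN image_subset_iff)
qed

lemma hom_HNN_stable_conj:
  assumes G: "group G" and \<psi>: "\<psi> \<in> hom (HNN Bg Ap \<theta>) G" and a: "a \<in> Ap"
  shows "inv\<^bsub>G\<^esub> \<psi> (HNN_stable Bg Ap \<theta>) \<otimes>\<^bsub>G\<^esub> \<psi> (HNN_base Bg Ap \<theta> a) \<otimes>\<^bsub>G\<^esub> \<psi> (HNN_stable Bg Ap \<theta>)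
    = \<psi> (HNN_base Bg Ap \<theta> (\<theta> a))"
proof -
  interpret \<psi>: group_hom "HNN Bg Ap \<theta>" G \<psi>
    using G \<psi> by (intro group_hom.intro group_hom_axioms.intro group_HNN)
  show ?thesis
    using arg_cong[OF HNN_stable_conj[where Bg = Bg and \<theta> = \<theta>, OF a], of \<psi>]
    by (simp add: \<psi>.G.inv_closed)
qed

text \<open>A descending extension with stable letter \<open>s\<close> is ascending with stable letter \<open>s\<inverse>\<close>.\<close>
lemma iso_HNN_ascending_stable_letter:
  fixes Bg :: "('b, 'm) monoid_scheme"
  assumes G: "group G" and Ap: "subgroup Ap Bg" and Am: "subgroup Am Bg"
    and \<theta>: "\<theta> \<in> iso (Bg\<lparr>carrier := Ap\<rparr>) (Bg\<lparr>carrier := Am\<rparr>)"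
    and asc_desc: "Ap = carrier Bg \<or> Am = carrier Bg"
    and \<psi>: "\<psi> \<in> iso (HNN Bg Ap \<theta>) G"
  defines "s \<equiv> \<psi> (HNN_stable Bg Ap \<theta>)" and "K \<equiv> \<psi> ` HNN_base Bg Ap \<theta> ` carrier Bg"
  obtains u where "u = s \<or> u = inv\<^bsub>G\<^esub> s"
    and "\<And>b. b \<in> K \<Longrightarrow> inv\<^bsub>G\<^esub> u \<otimes>\<^bsub>G\<^esub> b \<otimes>\<^bsub>G\<^esub> u \<in> K"
    and "generate G (insert u K) = carrier G"
proof -
  interpret G: group G by (rule G)
  have \<psi>_hom: "\<psi> \<in> hom (HNN Bg Ap \<theta>) G" by (rule iso_imp_homomorphism[OF \<psi>])
  have s: "s \<in> carrier G" unfolding s_def using hom_in_carrier[OF \<psi>_hom] by simp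
  have K_carrier: "K \<subseteq> carrier G" unfolding K_def using hom_in_carrier[OF \<psi>_hom] by auto
  have gen: "generate G (insert s K) = carrier G"
    unfolding s_def K_def by (rule generate_iso_HNN[OF G \<psi>])
  have stable_conj: "inv\<^bsub>G\<^esub> s \<otimes>\<^bsub>G\<^esub> \<psi> (HNN_base Bg Ap \<theta> a) \<otimes>\<^bsub>G\<^esub> s = \<psi> (HNN_base Bg Ap \<theta> (\<theta> a))"
    if "a \<in> Ap" for a
    unfolding s_def by (rule hom_HNN_stable_conj[OF G \<psi>_hom that])
  have \<theta>_bij: "bij_betw \<theta> Ap Am" using \<theta> by (simp add: iso_def)
  have Ap_Am: "Ap \<subseteq> carrier Bg" "Am \<subseteq> carrier Bg"
    using Ap Am by (auto dest: subgroup.subset)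
  show thesis
  proof (cases "Ap = carrier Bg")
    case True
    show thesis
    proof (rule that[OF _ _ gen])
      fix b assume "b \<in> K"
      then obtain a where "a \<in> Ap" "b = \<psi> (HNN_base Bg Ap \<theta> a)" using True K_def by auto
      then show "inv\<^bsub>G\<^esub> s \<otimes>\<^bsub>G\<^esub> b \<otimes>\<^bsub>G\<^esub> s \<in> K"
        using stable_conj bij_betwE[OF \<theta>_bij] Ap_Am(2) by (auto simp: K_def)
    qed simp
  next
    case False
    with asc_desc have "Am = carrier Bg" by simp
    then have K_\<theta>: "K = \<psi> ` HNN_base Bg Ap \<theta> ` \<theta> ` Ap"
      using bij_betw_imp_surj_on[OF \<theta>_bij] by (simp add: K_def)
    show thesis
    proof (rule that)
      fix b assume "b \<in> K"
      then obtain a where a: "a \<in> Ap" "b = \<psi> (HNN_base Bg Ap \<theta> (\<theta> a))" using K_\<theta> by blast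
      have "\<psi> (HNN_base Bg Ap \<theta> a) \<in> carrier G" using hom_in_carrier[OF \<psi>_hom] by simp
      then have "inv\<^bsub>G\<^esub> (inv\<^bsub>G\<^esub> s) \<otimes>\<^bsub>G\<^esub> b \<otimes>\<^bsub>G\<^esub> inv\<^bsub>G\<^esub> s = \<psi> (HNN_base Bg Ap \<theta> a)"
        using s by (simp add: a(2) flip: stable_conj[OF a(1)]) (simp add: G.m_assoc)
      then show "inv\<^bsub>G\<^esub> (inv\<^bsub>G\<^esub> s) \<otimes>\<^bsub>G\<^esub> b \<otimes>\<^bsub>G\<^esub> inv\<^bsub>G\<^esub> s \<in> K"
        using a(1) Ap_Am(1) by (auto simp: K_def)
    qed (use G.generate_insert_inv[OF s K_carrier] gen in simp_all)
  qed
qed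

lemma fin_gen_hom_image:
  assumes G: "group G" "fin_gen G" and H: "group H" and h: "h \<in> hom G H"
  shows "fin_gen (H\<lparr>carrier := h ` carrier G\<rparr>)"
proof -
  interpret h: group_hom G H h
    using G H h by (intro group_hom.intro group_hom_axioms.intro)
  obtain S where S: "finite S" "S \<subseteq> carrier G" "generate G S = carrier G"
    using G(2) unfolding fin_gen_def by blast
  have "h ` S \<subseteq> h ` carrier G" "generate H (h ` S) = h ` carrier G"
    using S h.generate_img by auto
  then show ?thesis
    unfolding fin_gen_def
    using S(1) h.H.generate_consistent[OF _ h.img_is_subgroup] by (intro exI[of _ "h ` S"]) simp
qed

section \<open>The character \<open>\<phi>\<close>\<close>

locale pi_phi =
  fixes \<phi> :: "pi_gen word set \<Rightarrow> int"
  assumes hom: "\<phi> \<in> hom pi_group integer_group"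
    and phi_t: "\<phi> pi_t = 1" and phi_a: "\<phi> pi_a = 0" and phi_b: "\<phi> pi_b = 0"
begin

sublocale phi: group_hom pi_group integer_group \<phi>
  by (intro group_hom.intro group_hom_axioms.intro group_pi group_integer_group hom)

lemma phi_eq_hom_on_gens:
  assumes h: "h \<in> hom pi_group integer_group"
    and "h pi_t = 1" "h pi_a = 0" "h pi_b = 0" and g: "g \<in> carrier pi_group"
  shows "\<phi> g = h g"
proof (rule hom_eq_on_generate[OF group_pi group_integer_group hom h])
  show "{pi_t, pi_a, pi_b} \<subseteq> carrier pi_group" "g \<in> generate pi_group {pi_t, pi_a, pi_b}"
    using g by (simp_all add: generate_pi_gens)
  show "\<phi> x = h x" if "x \<in> {pi_t, pi_a, pi_b}" for x
    using that assms(2-4) phi_t phi_a phi_b by auto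
qed

lemma phi_eq_fst_rep_b: "g \<in> carrier pi_group \<Longrightarrow> \<phi> g = fst (rep_b g)"
  by (rule phi_eq_hom_on_gens) (simp_all add: hom_compose[OF rep_b_hom fst_hom_aff2, unfolded comp_def])

lemma phi_eq_uminus_fst_rep_a: "g \<in> carrier pi_group \<Longrightarrow> \<phi> g = - fst (rep_a g)"
proof (rule phi_eq_hom_on_gens)
  have "uminus \<in> hom integer_group integer_group"
    by (rule homI) simp_all
  then show "(\<lambda>g. - fst (rep_a g)) \<in> hom pi_group integer_group"
    using hom_compose[OF hom_compose[OF rep_a_hom fst_hom_aff2]] by (simp add: comp_def)
qed simp_all

lemma dyadic_rep_of_sign:
  assumes "\<bar>\<epsilon>\<bar> = 1"
  obtains \<rho> where "\<rho> \<in> hom pi_group aff2" "\<rho> ` carrier pi_group \<subseteq> UNIV \<times> dyadic"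
    and "\<And>g. g \<in> carrier pi_group \<Longrightarrow> fst (\<rho> g) = \<epsilon> * \<phi> g"
    and "\<And>N. \<exists>g\<in>carrier pi_group. \<rho> g = (0, 1 / 2 ^ N)"
proof (cases "\<epsilon> = 1")
  case True
  then show ?thesis
    using that[OF rep_b_hom rep_b_dyadic _ rep_b_translation] by (simp add: phi_eq_fst_rep_b)
next
  case False
  with assms have "\<epsilon> = - 1" by linarith
  then show ?thesis
    using that[OF rep_a_hom rep_a_dyadic _ rep_a_translation] by (simp add: phi_eq_uminus_fst_rep_a)
qed

lemma no_ascending_fin_gen_subgroup:
  assumes u: "u \<in> carrier pi_group" and phi_u: "\<bar>\<phi> u\<bar> = 1"
    and K: "subgroup K pi_group" "fin_gen (pi_group\<lparr>carrier := K\<rparr>)"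
    and phi_K: "\<And>b. b \<in> K \<Longrightarrow> \<phi> b = 0"
    and conj: "\<And>b. b \<in> K \<Longrightarrow> inv\<^bsub>pi_group\<^esub> u \<otimes>\<^bsub>pi_group\<^esub> b \<otimes>\<^bsub>pi_group\<^esub> u \<in> K"
    and gen: "generate pi_group (insert u K) = carrier pi_group"
  shows False
proof -
  obtain S where S: "finite S" "S \<subseteq> K" "generate (pi_group\<lparr>carrier := K\<rparr>) S = K"
    using K(2) unfolding fin_gen_def by auto
  then have K_generate: "generate pi_group S = K"
    using pi.generate_consistent[OF S(2) K(1)] by simp
  have S_carrier: "S \<subseteq> carrier pi_group"
    using S(2) subgroup.subset[OF K(1)] by blast
  obtain \<rho> where \<rho>: "\<rho> \<in> hom pi_group aff2" "\<rho> ` carrier pi_group \<subseteq> UNIV \<times> dyadic"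
    and fst_\<rho>: "\<And>g. g \<in> carrier pi_group \<Longrightarrow> fst (\<rho> g) = \<phi> u * \<phi> g"
    and translation: "\<And>N. \<exists>g\<in>carrier pi_group. \<rho> g = (0, 1 / 2 ^ N)"
    using dyadic_rep_of_sign[OF phi_u] by metis
  have "fst (\<rho> s) = 0" if "s \<in> S" for s
  proof -
    have "s \<in> K" "s \<in> carrier pi_group" using that S(2) S_carrier by auto
    then show ?thesis using phi_K fst_\<rho> by simp
  qed
  then obtain M where M: "\<rho> ` K \<subseteq> {0} \<times> dyadic_level M"
    using dyadic_image_bounded_if_fin_gen[OF group_pi \<rho> S(1) S_carrier] K_generate by auto
  obtain g where g: "g \<in> carrier pi_group" "\<rho> g = (0, 1 / 2 ^ Suc M)"
    using translation by blast
  have "fst (\<rho> u) = 1"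
    using fst_\<rho>[OF u] phi_u abs_mult_self_eq[of "\<phi> u"] by simp
  then have "snd (\<rho> g) \<in> dyadic_level M"
    using translation_in_dyadic_level_if_ascending[OF group_pi \<rho>(1) u K(1) conj gen _ M g(1)] g(2)
    by simp
  with g(2) show False
    using inverse_two_power_Suc_notin_dyadic_level by simp
qed

lemma not_ascending_or_descending_HNN:
  fixes Bg :: "('b, 'm) monoid_scheme"
  assumes Bg: "group Bg" "fin_gen Bg" and Ap: "subgroup Ap Bg" and Am: "subgroup Am Bg"
    and \<theta>: "\<theta> \<in> iso (Bg\<lparr>carrier := Ap\<rparr>) (Bg\<lparr>carrier := Am\<rparr>)"
    and asc_desc: "Ap = carrier Bg \<or> Am = carrier Bg"
    and \<psi>: "\<psi> \<in> iso (HNN Bg Ap \<theta>) pi_group"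
    and phi_stable: "\<phi> (\<psi> (HNN_stable Bg Ap \<theta>)) = 1"
    and phi_base: "\<forall>x \<in> carrier Bg. \<phi> (\<psi> (HNN_base Bg Ap \<theta> x)) = 0"
  shows False
proof -
  define s where "s = \<psi> (HNN_stable Bg Ap \<theta>)"
  define K where "K = \<psi> ` HNN_base Bg Ap \<theta> ` carrier Bg"
  have \<psi>_hom: "\<psi> \<in> hom (HNN Bg Ap \<theta>) pi_group" by (rule iso_imp_homomorphism[OF \<psi>])
  have s: "s \<in> carrier pi_group" unfolding s_def using hom_in_carrier[OF \<psi>_hom] by simp
  define \<beta> where "\<beta> = \<psi> \<circ> HNN_base Bg Ap \<theta>"
  have \<beta>: "\<beta> \<in> hom Bg pi_group"
    unfolding \<beta>_def by (rule hom_compose[OF HNN_base_hom \<psi>_hom])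
  interpret \<beta>: group_hom Bg pi_group \<beta>
    using Bg(1) \<beta> by (intro group_hom.intro group_hom_axioms.intro group_pi)
  have K_\<beta>: "K = \<beta> ` carrier Bg" unfolding K_def \<beta>_def by (simp add: image_comp)
  have K: "subgroup K pi_group" "fin_gen (pi_group\<lparr>carrier := K\<rparr>)"
    unfolding K_\<beta> using \<beta>.img_is_subgroup fin_gen_hom_image[OF Bg group_pi \<beta>] by simp_all
  have phi_K: "\<phi> b = 0" if "b \<in> K" for b
    using that phi_base by (auto simp: K_def)
  obtain u where u: "u = s \<or> u = inv\<^bsub>pi_group\<^esub> s"
    and conj: "\<And>b. b \<in> K \<Longrightarrow> inv\<^bsub>pi_group\<^esub> u \<otimes>\<^bsub>pi_group\<^esub> b \<otimes>\<^bsub>pi_group\<^esub> u \<in> K"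
    and gen: "generate pi_group (insert u K) = carrier pi_group"
    using iso_HNN_ascending_stable_letter[OF group_pi Ap Am \<theta> asc_desc \<psi>] unfolding s_def K_def
    by blast
  have "u \<in> carrier pi_group" "\<bar>\<phi> u\<bar> = 1"
    using u s phi_stable by (auto simp: s_def)
  then show False
    by (rule no_ascending_fin_gen_subgroup[OF _ _ K phi_K conj gen])
qed

lemma generate_pi_kernel:
  assumes i: "i \<ge> 1"
  shows "generate pi_group (pi_kernel_gens i) = phi_kernel pi_group \<phi> i"
    (is "?H = ?K")
proof
  have "pi_kernel_gens i \<subseteq> ?K"
    unfolding pi_kernel_gens_def phi_kernel_def by (auto simp: phi.hom_nat_pow phi_t phi_a phi_b)
  then show H_K: "?H \<subseteq> ?K"
    by (rule pi.generate_subgroup_incl[OF _ subgroup_phi_kernel[OF group_pi hom]])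
  show "?K \<subseteq> ?H"
  proof
    fix g assume g: "g \<in> ?K"
    then have "g \<in> pi.power_translates pi_t i ?H"
      using pi_carrier_subset_power_translates[OF i] unfolding phi_kernel_def by auto
    then obtain h r where h: "h \<in> ?H" "r < i"
      and g_eq: "g = h \<otimes>\<^bsub>pi_group\<^esub> inv\<^bsub>pi_group\<^esub> (pi_t [^]\<^bsub>pi_group\<^esub> r)"
      by (rule pi.power_translatesE)
    have hG: "h \<in> carrier pi_group"
      using h(1) pi.generate_incl[OF pi_kernel_gens_carrier] by auto
    have "int i dvd \<phi> h" "int i dvd \<phi> g"
      using subsetD[OF H_K h(1)] g unfolding phi_kernel_def by (simp_all add: dvd_eq_mod_eq_0)
    then have "int i dvd \<phi> h - \<phi> g" by (rule dvd_diff)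
    moreover have "\<phi> h - \<phi> g = int r"
      using hG by (simp add: g_eq phi.hom_nat_pow phi_t)
    ultimately have "i dvd r" by simp
    with h(2) have "r = 0" by (auto dest: dvd_imp_le)
    with g_eq hG show "g \<in> ?H" using h(1) by simp
  qed
qed

lemma rk_pi_kernel_le_3:
  assumes i: "i \<ge> 1"
  shows "rk (pi_group\<lparr>carrier := phi_kernel pi_group \<phi> i\<rparr>) \<le> 3"
proof -
  have gen: "generate pi_group (pi_kernel_gens i) = phi_kernel pi_group \<phi> i"
    by (rule generate_pi_kernel[OF i])
  then have S_K: "pi_kernel_gens i \<subseteq> phi_kernel pi_group \<phi> i"
    using generate.incl[of _ "pi_kernel_gens i" pi_group] by blast
  have "rk (pi_group\<lparr>carrier := phi_kernel pi_group \<phi> i\<rparr>) \<le> card (pi_kernel_gens i)"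
    using pi.generate_consistent[OF S_K subgroup_phi_kernel[OF group_pi hom]] gen S_K
    by (intro rk_le_card) (simp_all add: pi_kernel_gens_def)
  also have "card (pi_kernel_gens i) \<le> 3"
    unfolding pi_kernel_gens_def by (simp add: card_insert_if)
  finally show ?thesis .
qed

lemma rank_gradient_pi: "rank_gradient pi_group \<phi> = 0"
  using rank_gradient_eq_0_if_rk_bounded[OF group_pi hom _ phi_t rk_pi_kernel_le_3] by simp

end

theorem proposition4p2:
  fixes \<phi> :: "pi_gen word set \<Rightarrow> int"
  assumes "\<phi> \<in> hom pi_group integer_group"
    and "\<phi> (pres_gen pi_rels T) = 1"
    and "\<phi> (pres_gen pi_rels A) = 0"
    and "\<phi> (pres_gen pi_rels B) = 0"
  shows "rank_gradient pi_group \<phi> = 0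
    \<and> \<not> (\<exists>(Bg :: 'b monoid) Ap Am \<theta> \<psi>.
            group Bg \<and> fin_gen Bg
          \<and> subgroup Ap Bg \<and> subgroup Am Bg
          \<and> \<theta> \<in> iso (Bg\<lparr>carrier := Ap\<rparr>) (Bg\<lparr>carrier := Am\<rparr>)
          \<and> (Ap = carrier Bg \<or> Am = carrier Bg)
          \<and> \<psi> \<in> iso (HNN Bg Ap \<theta>) pi_group
          \<and> \<phi> (\<psi> (HNN_stable Bg Ap \<theta>)) = 1
          \<and> (\<forall>x \<in> carrier Bg. \<phi> (\<psi> (HNN_base Bg Ap \<theta> x)) = 0))"
proof -
  interpret pi_phi \<phi>
    using assms by unfold_locales
  show ?thesis
    using rank_gradient_pi not_ascending_or_descending_HNN by blast
qed

end
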